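(* There is a constant $c$ such that the following holds. Let $x\in\{0,1\}^n$ and let $A$ be a finite set with $x\in A$ and $CT(A\mid x)\le\epsilon$. Then there exist a finite set $A_1$ and a finite partition $\mathcal{A}$ with $C(\mathcal{A})\le\epsilon+c\log n$ such that: 1) $x\in A_1$ and $CT(A_1\mid x)\le\epsilon+c\log n$; 2) $CT(A\mid A_1)<\epsilon+c\log n$ and $CT(A_1\mid A)<\epsilon+c\log n$; 3) $|A_1|\le|A|$; 4) $A_1\in\mathcal{A}$.
   Context: Strings are binary; $C$ is plain Kolmogorov complexity w.r.t. a fixed universal decompressor $D$; finite sets and finite families of finite sets have complexity defined via fixed computable encodings. $CT(y\mid x)$ is the minimal length of a program $p$ such that $D(p,z)$ is defined for all $z$ and $D(p,x)=y$ (with sets replaced by their codes). A family $\mathcal{A}$ of sets is a partition if for all $A',A''\in\mathcal{A}$, $A'\cap A''\ne\varnothing$ implies $A'=A''$. *)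

theory Defs
  imports Complex_Main "HOL-Library.List_Lexorder"
begin

datatype recf = Zf | Sf | Proj nat | Comp recf "recf list" | Prim recf recf | Mn recf

inductive eval :: "recf \<Rightarrow> nat list \<Rightarrow> nat \<Rightarrow> bool" where
  eval_Z: "eval Zf xs 0"
| eval_S: "eval Sf (x # xs) (Suc x)"
| eval_Proj: "i < length xs \<Longrightarrow> eval (Proj i) xs (xs ! i)"
| eval_Comp: "list_all2 (\<lambda>g v. eval g xs v) gs vs \<Longrightarrow> eval f vs y \<Longrightarrow> eval (Comp f gs) xs y"
| eval_Prim0: "eval g xs y \<Longrightarrow> eval (Prim g h) (0 # xs) y"
| eval_PrimS: "eval (Prim g h) (k # xs) z \<Longrightarrow> eval h (k # z # xs) y
               \<Longrightarrow> eval (Prim g h) (Suc k # xs) y"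
| eval_Mn: "eval f (y # xs) 0 \<Longrightarrow> (\<forall>z<y. \<exists>v. eval f (z # xs) v \<and> v > 0)
            \<Longrightarrow> eval (Mn f) xs y"

type_synonym str = "bool list"

fun nat_of_str :: "str \<Rightarrow> nat" where
  "nat_of_str [] = 0"
| "nat_of_str (b # bs) = 2 * nat_of_str bs + (if b then 2 else 1)"

definition computable2 :: "(str \<Rightarrow> str \<Rightarrow> str option) \<Rightarrow> bool" where
  "computable2 F \<longleftrightarrow> (\<exists>f. \<forall>p x y.
      F p x = Some y \<longleftrightarrow> eval f [nat_of_str p, nat_of_str x] (nat_of_str y))"

definition universal_decompressor :: "(str \<Rightarrow> str \<Rightarrow> str option) \<Rightarrow> bool" where
  "universal_decompressor D \<longleftrightarrow> computable2 D \<and>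
     (\<forall>F. computable2 F \<longrightarrow>
        (\<exists>c::nat. \<forall>p. \<exists>q. length q \<le> length p + c \<and> (\<forall>x. D q x = F p x)))"

definition KC :: "(str \<Rightarrow> str \<Rightarrow> str option) \<Rightarrow> str \<Rightarrow> nat" where
  "KC D y = (LEAST k. \<exists>p. length p = k \<and> D p [] = Some y)"

definition CT :: "(str \<Rightarrow> str \<Rightarrow> str option) \<Rightarrow> str \<Rightarrow> str \<Rightarrow> nat" where
  "CT D y x = (LEAST k. \<exists>p. length p = k \<and> (\<forall>z. D p z \<noteq> None) \<and> D p x = Some y)"

definition self_delim :: "str \<Rightarrow> str" where
  "self_delim s = concat (map (\<lambda>b. [b, b]) s) @ [False, True]"

definition enc_set :: "str set \<Rightarrow> str" where
  "enc_set A = concat (map self_delim (sorted_list_of_set A))"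

definition enc_family :: "str set set \<Rightarrow> str" where
  "enc_family F = concat (map self_delim (sorted_list_of_set (enc_set ` F)))"

definition is_partition :: "'a set set \<Rightarrow> bool" where
  "is_partition \<A> \<longleftrightarrow> (\<forall>A1\<in>\<A>. \<forall>A2\<in>\<A>. A1 \<inter> A2 \<noteq> {} \<longrightarrow> A1 = A2)"

end

theory Submission
  imports Defs
begin

text \<open>Let \<open>p\<close> be a shortest total program with \<open>D p x = A\<close>. The set
  \<open>A\<^sub>1 = {w \<in> A. D p w = A}\<close> contains \<open>x\<close>, is computed from \<open>x\<close> (run \<open>p\<close> on \<open>x\<close>, then keep the
  elements of the result that \<open>p\<close> maps back to it), computed from \<open>A\<close> likewise, and \<open>A\<close> is recovered
  from \<open>A\<^sub>1\<close> by running \<open>p\<close> on any element of \<open>A\<^sub>1\<close>. Since a string \<open>w\<close> determines \<open>D p w\<close>, the sets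
  \<open>{w \<in> D p z. D p w = D p z}\<close> for \<open>|z| = n\<close> are pairwise disjoint, and this partition is
  computed from \<open>p\<close> and \<open>n\<close>. All programs involved have length \<open>|p| + O(log n)\<close>.\<close>

section \<open>Partial recursive functions uniform in a parameter\<close>

fun prim_rec :: "(nat list \<Rightarrow> nat) \<Rightarrow> (nat list \<Rightarrow> nat) \<Rightarrow> nat list \<Rightarrow> nat" where
  "prim_rec g h [] = 0"
| "prim_rec g h (0 # xs) = g xs"
| "prim_rec g h (Suc n # xs) = h (n # prim_rec g h (n # xs) # xs)"

text \<open>Outside \<open>T\<close> nothing is required, which lets
  functions call the (partial) decompressor on parameters known to be total programs.\<close>
definition ucomputable :: "(nat \<Rightarrow> bool) \<Rightarrow> nat \<Rightarrow> (nat \<Rightarrow> nat list \<Rightarrow> nat) \<Rightarrow> bool" where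
  "ucomputable T k g \<longleftrightarrow> (\<exists>r. \<forall>q xs. T q \<longrightarrow> length xs = k \<longrightarrow> eval r (xs @ [q]) (g q xs))"

definition udecidable :: "(nat \<Rightarrow> bool) \<Rightarrow> nat \<Rightarrow> (nat \<Rightarrow> nat list \<Rightarrow> bool) \<Rightarrow> bool" where
  "udecidable T k P \<longleftrightarrow> ucomputable T k (\<lambda>q xs. if P q xs then 0 else 1)"

named_theorems ucomputable_intros

lemma ucomputable_cong:
  assumes "ucomputable T k g" and "\<And>q xs. T q \<Longrightarrow> length xs = k \<Longrightarrow> g q xs = g' q xs"
  shows "ucomputable T k g'"
  using assms unfolding ucomputable_def by metis

fun const_recf :: "nat \<Rightarrow> recf" where
  "const_recf 0 = Zf" | "const_recf (Suc c) = Comp Sf [const_recf c]"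

lemma eval_const_recf: "eval (const_recf c) xs c"
proof (induction c)
  case 0 then show ?case by (simp add: eval_Z)
next
  case (Suc c)
  have "eval Sf [c] (Suc c)" using eval_S[of c "[]"] by simp
  then show ?case using Suc by (auto intro!: eval_Comp[where vs="[c]"])
qed

lemma ucomputable_const [ucomputable_intros]: "ucomputable T k (\<lambda>q xs. c)"
  unfolding ucomputable_def using eval_const_recf by blast

lemma ucomputable_nth [ucomputable_intros]:
  assumes "i < k" shows "ucomputable T k (\<lambda>q xs. xs ! i)"
  unfolding ucomputable_def
proof (intro exI allI impI)
  fix q and xs :: "nat list" assume "length xs = k"
  then show "eval (Proj i) (xs @ [q]) (xs ! i)"
    using eval_Proj[of i "xs @ [q]"] assms by (simp add: nth_append)
qed

lemma ucomputable_param [ucomputable_intros]: "ucomputable T k (\<lambda>q xs. q)"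
  unfolding ucomputable_def
proof (intro exI allI impI)
  fix q and xs :: "nat list" assume "length xs = k"
  moreover have "eval (Proj (length xs)) (xs @ [q]) q" using eval_Proj[of "length xs" "xs @ [q]"] by simp
  ultimately show "eval (Proj k) (xs @ [q]) q" by simp
qed

lemma ucomputable_comp:
  assumes f: "ucomputable T m f" and gs: "list_all (ucomputable T k) gs" and l: "length gs = m"
  shows "ucomputable T k (\<lambda>q xs. f q (map (\<lambda>g. g q xs) gs))"
proof -
  obtain rf where rf: "\<And>q xs. T q \<Longrightarrow> length xs = m \<Longrightarrow> eval rf (xs @ [q]) (f q xs)"
    using f unfolding ucomputable_def by blast
  have "\<forall>g\<in>set gs. \<exists>r. \<forall>q xs. T q \<longrightarrow> length xs = k \<longrightarrow> eval r (xs @ [q]) (g q xs)"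
    using gs unfolding ucomputable_def list_all_iff by blast
  then obtain R where R: "\<And>g q xs. g \<in> set gs \<Longrightarrow> T q \<Longrightarrow> length xs = k \<Longrightarrow> eval (R g) (xs @ [q]) (g q xs)"
    by metis
  show ?thesis unfolding ucomputable_def
  proof (intro exI allI impI)
    fix q xs assume T: "T q" and lx: "length (xs::nat list) = k"
    have "list_all2 (\<lambda>g v. eval g (xs @ [q]) v) (map R gs @ [Proj k]) (map (\<lambda>g. g q xs) gs @ [q])"
    proof (rule list_all2_appendI)
      show "list_all2 (\<lambda>g v. eval g (xs @ [q]) v) (map R gs) (map (\<lambda>g. g q xs) gs)"
        using R[OF _ T lx] by (auto simp: list_all2_conv_all_nth)
      show "list_all2 (\<lambda>g v. eval g (xs @ [q]) v) [Proj k] [q]"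
        using eval_Proj[of k "xs @ [q]"] lx by auto
    qed
    moreover have "eval rf (map (\<lambda>g. g q xs) gs @ [q]) (f q (map (\<lambda>g. g q xs) gs))"
      using rf[OF T] l by simp
    ultimately show "eval (Comp rf (map R gs @ [Proj k])) (xs @ [q]) (f q (map (\<lambda>g. g q xs) gs))"
      by (rule eval_Comp)
  qed
qed

lemma ucomputable_prim_rec:
  assumes g: "ucomputable T k g" and h: "ucomputable T (Suc (Suc k)) h"
  shows "ucomputable T (Suc k) (\<lambda>q xs. prim_rec (g q) (h q) xs)"
proof -
  obtain rg where rg: "\<And>q xs. T q \<Longrightarrow> length xs = k \<Longrightarrow> eval rg (xs @ [q]) (g q xs)"
    using g unfolding ucomputable_def by blast
  obtain rh where rh: "\<And>q xs. T q \<Longrightarrow> length xs = Suc (Suc k) \<Longrightarrow> eval rh (xs @ [q]) (h q xs)"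
    using h unfolding ucomputable_def by blast
  have ev: "eval (Prim rg rh) (n # ys @ [q]) (prim_rec (g q) (h q) (n # ys))"
    if "T q" "length ys = k" for n ys q
  proof (induction n)
    case 0 then show ?case using rg[OF that] by (simp add: eval_Prim0)
  next
    case (Suc n)
    show ?case
      by (rule eval_PrimS[OF Suc])
         (use rh[OF that(1), of "n # prim_rec (g q) (h q) (n # ys) # ys"] that in simp)
  qed
  show ?thesis unfolding ucomputable_def
  proof (intro exI allI impI)
    fix q xs assume "T q" "length (xs :: nat list) = Suc k"
    then show "eval (Prim rg rh) (xs @ [q]) (prim_rec (g q) (h q) xs)"
      using ev[of q "tl xs" "hd xs"] by (cases xs) auto
  qed
qed

lemma ucomputable_Least_zero:
  assumes f: "ucomputable T (Suc k) f"
    and ex: "\<And>q xs. T q \<Longrightarrow> length xs = k \<Longrightarrow> \<exists>y. f q (y # xs) = 0"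
  shows "ucomputable T k (\<lambda>q xs. LEAST y. f q (y # xs) = (0::nat))"
proof -
  obtain rf where rf: "\<And>q xs. T q \<Longrightarrow> length xs = Suc k \<Longrightarrow> eval rf (xs @ [q]) (f q xs)"
    using f unfolding ucomputable_def by blast
  show ?thesis unfolding ucomputable_def
  proof (intro exI allI impI)
    fix q xs assume T: "T q" and lx: "length (xs::nat list) = k"
    let ?y = "LEAST y. f q (y # xs) = 0"
    have y: "f q (?y # xs) = 0" by (rule LeastI_ex[OF ex[OF T lx]])
    show "eval (Mn rf) (xs @ [q]) ?y"
    proof (rule eval_Mn)
      show "eval rf (?y # xs @ [q]) 0" using rf[OF T, of "?y # xs"] y lx by simp
      show "\<forall>z<?y. \<exists>v. eval rf (z # xs @ [q]) v \<and> 0 < v"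
      proof (intro allI impI)
        fix z assume "z < ?y"
        then have "f q (z # xs) \<noteq> 0" by (rule not_less_Least)
        moreover have "eval rf (z # xs @ [q]) (f q (z # xs))" using rf[OF T, of "z # xs"] lx by simp
        ultimately show "\<exists>v. eval rf (z # xs @ [q]) v \<and> 0 < v" by blast
      qed
    qed
  qed
qed

lemma ucomputable_call:
  assumes call: "\<And>c b. P c \<Longrightarrow> eval r [c, b] (f c b)"
    and a: "ucomputable T k a" and b: "ucomputable T k b"
    and P: "\<And>q xs. T q \<Longrightarrow> length xs = k \<Longrightarrow> P (a q xs)"
  shows "ucomputable T k (\<lambda>q xs. f (a q xs) (b q xs))"
proof -
  obtain ra where ra: "\<And>q xs. T q \<Longrightarrow> length xs = k \<Longrightarrow> eval ra (xs @ [q]) (a q xs)"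
    using a unfolding ucomputable_def by blast
  obtain rb where rb: "\<And>q xs. T q \<Longrightarrow> length xs = k \<Longrightarrow> eval rb (xs @ [q]) (b q xs)"
    using b unfolding ucomputable_def by blast
  show ?thesis unfolding ucomputable_def
  proof (intro exI allI impI)
    fix q xs assume "T q" "length (xs :: nat list) = k"
    then show "eval (Comp r [ra, rb]) (xs @ [q]) (f (a q xs) (b q xs))"
      using ra rb call P by (intro eval_Comp[where vs="[a q xs, b q xs]"]) auto
  qed
qed

lemma ucomputable_lift1:
  "ucomputable T 1 (\<lambda>q xs. f q (xs!0)) \<Longrightarrow> ucomputable T k g1 \<Longrightarrow>
   ucomputable T k (\<lambda>q xs. f q (g1 q xs))"
  using ucomputable_comp[of T 1 "\<lambda>q xs. f q (xs!0)" k "[g1]"] by simp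

lemma ucomputable_lift2:
  "ucomputable T 2 (\<lambda>q xs. f q (xs!0) (xs!1)) \<Longrightarrow> ucomputable T k g1 \<Longrightarrow> ucomputable T k g2 \<Longrightarrow>
   ucomputable T k (\<lambda>q xs. f q (g1 q xs) (g2 q xs))"
  using ucomputable_comp[of T 2 "\<lambda>q xs. f q (xs!0) (xs!1)" k "[g1, g2]"] by simp

lemma ucomputable_lift3:
  "ucomputable T 3 (\<lambda>q xs. f q (xs!0) (xs!1) (xs!2)) \<Longrightarrow>
   ucomputable T k g1 \<Longrightarrow> ucomputable T k g2 \<Longrightarrow> ucomputable T k g3 \<Longrightarrow>
   ucomputable T k (\<lambda>q xs. f q (g1 q xs) (g2 q xs) (g3 q xs))"
  using ucomputable_comp[of T 3 "\<lambda>q xs. f q (xs!0) (xs!1) (xs!2)" k "[g1, g2, g3]"] by simp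

lemma ucomputable_Suc [ucomputable_intros]:
  "ucomputable T k g \<Longrightarrow> ucomputable T k (\<lambda>q xs. Suc (g q xs))"
proof (rule ucomputable_lift1[where f = "\<lambda>q. Suc"])
  show "ucomputable T 1 (\<lambda>q xs. Suc (xs ! 0))"
    unfolding ucomputable_def
    by (rule exI[of _ Sf]) (auto simp: length_Suc_conv intro: eval_S)
qed

lemma ucomputable_rec:
  assumes g: "ucomputable T k g" and h: "ucomputable T (Suc (Suc k)) h"
    and f0: "\<And>q ys. length ys = k \<Longrightarrow> f q 0 ys = g q ys"
    and fSuc: "\<And>q n ys. length ys = k \<Longrightarrow> f q (Suc n) ys = h q (n # f q n ys # ys)"
  shows "ucomputable T (Suc k) (\<lambda>q xs. f q (hd xs) (tl xs))"
proof (rule ucomputable_cong[OF ucomputable_prim_rec[OF g h]])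
  fix q xs assume "length (xs::nat list) = Suc k"
  then obtain n ys where xs: "xs = n # ys" and l: "length ys = k" by (cases xs) auto
  have "prim_rec (g q) (h q) (n # ys) = f q n ys" by (induction n) (auto simp: f0[OF l] fSuc[OF l])
  then show "prim_rec (g q) (h q) xs = f q (hd xs) (tl xs)" using xs by simp
qed

lemma ucomputable_rec1:
  assumes g: "ucomputable T 0 (\<lambda>q xs. g q)" and h: "ucomputable T 2 (\<lambda>q xs. h q (xs!0) (xs!1))"
    and "\<And>q. f q 0 = g q" and "\<And>q n. f q (Suc n) = h q n (f q n)"
  shows "ucomputable T 1 (\<lambda>q xs. f q (xs!0))"
proof -
  have "ucomputable T (Suc 0) (\<lambda>q xs. f q (xs!0))"
    by (rule ucomputable_cong[OF ucomputable_rec[of T 0 "\<lambda>q ys. g q" "\<lambda>q ys. h q (ys!0) (ys!1)"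
          "\<lambda>q n ys. f q n", OF g h[unfolded numeral_2_eq_2]]])
       (use assms(3,4) in \<open>auto simp: length_Suc_conv\<close>)
  then show ?thesis by simp
qed

lemma ucomputable_rec2:
  assumes g: "ucomputable T 1 (\<lambda>q xs. g q (xs!0))"
    and h: "ucomputable T 3 (\<lambda>q xs. h q (xs!0) (xs!1) (xs!2))"
    and f0: "\<And>q a. f q 0 a = g q a" and fSuc: "\<And>q n a. f q (Suc n) a = h q n (f q n a) a"
  shows "ucomputable T 2 (\<lambda>q xs. f q (xs!0) (xs!1))"
proof -
  have "ucomputable T (Suc (Suc 0)) (\<lambda>q xs. f q (xs!0) (xs!1))"
    by (rule ucomputable_cong[OF ucomputable_rec[of T "Suc 0" "\<lambda>q ys. g q (ys!0)"
          "\<lambda>q ys. h q (ys!0) (ys!1) (ys!2)" "\<lambda>q n ys. f q n (ys!0)",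
          OF g[unfolded One_nat_def] h[unfolded numeral_3_eq_3]]])
       (use f0 fSuc in \<open>auto simp: nth_tl length_Suc_conv\<close>)
  then show ?thesis by (simp add: numeral_2_eq_2)
qed

lemma ucomputable_rec3:
  assumes g: "ucomputable T 2 (\<lambda>q xs. g q (xs!0) (xs!1))"
    and h: "ucomputable T 4 (\<lambda>q xs. h q (xs!0) (xs!1) (xs!2) (xs!3))"
    and f0: "\<And>q a b. f q 0 a b = g q a b"
    and fSuc: "\<And>q n a b. f q (Suc n) a b = h q n (f q n a b) a b"
  shows "ucomputable T 3 (\<lambda>q xs. f q (xs!0) (xs!1) (xs!2))"
proof -
  have four: "(4::nat) = Suc (Suc (Suc (Suc 0)))" by simp
  have "ucomputable T (Suc (Suc (Suc 0))) (\<lambda>q xs. f q (xs!0) (xs!1) (xs!2))"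
    by (rule ucomputable_cong[OF ucomputable_rec[of T "Suc (Suc 0)" "\<lambda>q ys. g q (ys!0) (ys!1)"
          "\<lambda>q ys. h q (ys!0) (ys!1) (ys!2) (ys!3)" "\<lambda>q n ys. f q n (ys!0) (ys!1)",
          OF g[unfolded numeral_2_eq_2] h[unfolded four]]])
       (use f0 fSuc in \<open>auto simp: nth_tl length_Suc_conv\<close>)
  then show ?thesis by (simp add: numeral_3_eq_3)
qed

lemma ucomputable_add_nth: "ucomputable T 2 (\<lambda>q xs. xs!0 + xs!1)"
  by (rule ucomputable_rec2[where g="\<lambda>q a. a" and h="\<lambda>q n z a. Suc z"])
     (auto intro!: ucomputable_intros)

lemma ucomputable_add [ucomputable_intros]:
  "ucomputable T k a \<Longrightarrow> ucomputable T k b \<Longrightarrow> ucomputable T k (\<lambda>q xs. a q xs + b q xs)"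
  by (rule ucomputable_lift2[OF ucomputable_add_nth])

lemma ucomputable_pred_nth: "ucomputable T 1 (\<lambda>q xs. xs!0 - 1)"
  by (rule ucomputable_rec1[where g="\<lambda>q. 0" and h="\<lambda>q n z. n"]) (auto intro!: ucomputable_intros)

lemma ucomputable_pred [ucomputable_intros]:
  "ucomputable T k a \<Longrightarrow> ucomputable T k (\<lambda>q xs. a q xs - Suc 0)"
  using ucomputable_lift1[OF ucomputable_pred_nth] by simp

lemma ucomputable_diff_nth: "ucomputable T 2 (\<lambda>q xs. xs!1 - xs!0)"
  by (rule ucomputable_rec2[where g="\<lambda>q a. a" and h="\<lambda>q n z a. z - 1"])
     (auto intro!: ucomputable_intros)

lemma ucomputable_diff [ucomputable_intros]:
  "ucomputable T k a \<Longrightarrow> ucomputable T k b \<Longrightarrow> ucomputable T k (\<lambda>q xs. a q xs - b q xs)"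
  by (rule ucomputable_lift2[OF ucomputable_diff_nth])

lemma ucomputable_mult_nth: "ucomputable T 2 (\<lambda>q xs. xs!0 * xs!1)"
  by (rule ucomputable_rec2[where g="\<lambda>q a. 0" and h="\<lambda>q n z a. z + a"])
     (auto intro!: ucomputable_intros)

lemma ucomputable_mult [ucomputable_intros]:
  "ucomputable T k a \<Longrightarrow> ucomputable T k b \<Longrightarrow> ucomputable T k (\<lambda>q xs. a q xs * b q xs)"
  by (rule ucomputable_lift2[OF ucomputable_mult_nth])

lemma ucomputable_power2_nth: "ucomputable T 1 (\<lambda>q xs. 2 ^ (xs!0))"
  by (rule ucomputable_rec1[where g="\<lambda>q. 1" and h="\<lambda>q n z. z + z"]) (auto intro!: ucomputable_intros)

lemma ucomputable_power2 [ucomputable_intros]: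
  "ucomputable T k a \<Longrightarrow> ucomputable T k (\<lambda>q xs. 2 ^ a q xs)"
  by (rule ucomputable_lift1[OF ucomputable_power2_nth])

lemma ucomputable_mod2_nth: "ucomputable T 1 (\<lambda>q xs. xs!0 mod 2)"
  by (rule ucomputable_rec1[where g="\<lambda>q. 0" and h="\<lambda>q n z. 1 - z"])
     (auto intro!: ucomputable_intros simp: mod_Suc)

lemma ucomputable_mod2 [ucomputable_intros]:
  "ucomputable T k a \<Longrightarrow> ucomputable T k (\<lambda>q xs. a q xs mod 2)"
  by (rule ucomputable_lift1[OF ucomputable_mod2_nth])

lemma ucomputable_div2_nth: "ucomputable T 1 (\<lambda>q xs. xs!0 div 2)"
  by (rule ucomputable_rec1[where g="\<lambda>q. 0" and h="\<lambda>q n z. z + n mod 2"])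
     (auto intro!: ucomputable_intros simp: div_Suc mod_Suc)

lemma ucomputable_div2 [ucomputable_intros]:
  "ucomputable T k a \<Longrightarrow> ucomputable T k (\<lambda>q xs. a q xs div 2)"
  by (rule ucomputable_lift1[OF ucomputable_div2_nth])

lemma udecidable_eq [ucomputable_intros]:
  "ucomputable T k a \<Longrightarrow> ucomputable T k b \<Longrightarrow> udecidable T k (\<lambda>q xs. a q xs = b q xs)"
  unfolding udecidable_def
  by (rule ucomputable_cong[where g="\<lambda>q xs. 1 - (1 - ((a q xs - b q xs) + (b q xs - a q xs)))"])
     (auto intro!: ucomputable_intros)

lemma udecidable_conj [ucomputable_intros]:
  "udecidable T k P \<Longrightarrow> udecidable T k Q \<Longrightarrow> udecidable T k (\<lambda>q xs. P q xs \<and> Q q xs)"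
  unfolding udecidable_def
  by (rule ucomputable_cong[where g="\<lambda>q xs. 1 - (1 - ((if P q xs then 0 else 1) + (if Q q xs then 0 else 1)))"])
     (auto intro!: ucomputable_intros)

lemma udecidable_disj [ucomputable_intros]:
  "udecidable T k P \<Longrightarrow> udecidable T k Q \<Longrightarrow> udecidable T k (\<lambda>q xs. P q xs \<or> Q q xs)"
  unfolding udecidable_def
  by (rule ucomputable_cong[where g="\<lambda>q xs. (if P q xs then 0 else 1) * (if Q q xs then 0 else (1::nat))"])
     (auto intro!: ucomputable_intros)

lemma udecidable_neg [ucomputable_intros]:
  "udecidable T k P \<Longrightarrow> udecidable T k (\<lambda>q xs. \<not> P q xs)"
  unfolding udecidable_def
  by (rule ucomputable_cong[where g="\<lambda>q xs. 1 - (if P q xs then 0 else 1)"]) (auto intro!: ucomputable_intros)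

lemma udecidable_iff [ucomputable_intros]:
  "udecidable T k P \<Longrightarrow> udecidable T k Q \<Longrightarrow> udecidable T k (\<lambda>q xs. P q xs \<longleftrightarrow> Q q xs)"
proof -
  assume "udecidable T k P" "udecidable T k Q"
  then have "udecidable T k (\<lambda>q xs. (if P q xs then 0 else 1) = (if Q q xs then 0 else (1::nat)))"
    unfolding udecidable_def[of T k P] udecidable_def[of T k Q] by (rule udecidable_eq)
  then show ?thesis unfolding udecidable_def by (rule ucomputable_cong) auto
qed

lemma ucomputable_If [ucomputable_intros]:
  "udecidable T k P \<Longrightarrow> ucomputable T k a \<Longrightarrow> ucomputable T k b \<Longrightarrow>
   ucomputable T k (\<lambda>q xs. if P q xs then a q xs else b q xs)"
  unfolding udecidable_def
  by (rule ucomputable_cong[where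
        g="\<lambda>q xs. (1 - (if P q xs then 0 else 1)) * a q xs + (if P q xs then 0 else 1) * b q xs"])
     (auto intro!: ucomputable_intros)

lemma ucomputable_Least1:
  assumes "udecidable T 2 (\<lambda>q xs. P q (xs!0) (xs!1))" and "\<And>q a. T q \<Longrightarrow> \<exists>y. P q y a"
  shows "ucomputable T 1 (\<lambda>q xs. LEAST y. P q y (xs!0))"
proof -
  have f: "ucomputable T (Suc 1) (\<lambda>q xs. if P q (xs!0) (xs!1) then 0 else 1)"
    using assms(1) by (simp add: udecidable_def numeral_2_eq_2)
  have "ucomputable T 1 (\<lambda>q xs. LEAST y. (\<lambda>q xs. if P q (xs!0) (xs!1) then 0 else 1) q (y # xs) = (0::nat))"
    by (rule ucomputable_Least_zero[OF f]) (use assms(2) in auto)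
  moreover have "\<And>b. ((if b then 0 else 1) = (0::nat)) \<longleftrightarrow> b" by simp
  ultimately show ?thesis by simp
qed

section \<open>Codes of strings\<close>

text \<open>Strings are handled through their numbers \<open>nat_of_str w\<close>. A function \<open>f_code\<close> on numbers
  mirrors the list function \<open>f\<close>, as stated by the lemmas \<open>nat_of_str_f\<close>/\<open>f_code_nat_of_str\<close>.\<close>

fun str_of_nat :: "nat \<Rightarrow> str" where
  "str_of_nat 0 = []"
| "str_of_nat (Suc n) = odd n # str_of_nat (n div 2)"

lemma nat_of_str_of_nat [simp]: "nat_of_str (str_of_nat n) = n"
  by (induction n rule: str_of_nat.induct) auto

lemma str_of_nat_of_str [simp]: "str_of_nat (nat_of_str s) = s"
proof (induction s)
  case (Cons b bs)
  have "nat_of_str (b # bs) = Suc (2 * nat_of_str bs + (if b then 1 else 0))" by simp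
  then show ?case using Cons by (simp del: nat_of_str.simps)
qed simp

lemma nat_of_str_eq_iff: "nat_of_str s = nat_of_str t \<longleftrightarrow> s = t"
  by (metis str_of_nat_of_str)

lemma nat_of_str_eq_0_iff [simp]: "nat_of_str s = 0 \<longleftrightarrow> s = []"
  by (cases s) auto

lemma length_le_nat_of_str: "length s \<le> nat_of_str s"
  by (induction s) auto

lemma nat_of_str_Cons_even_iff: "nat_of_str (b # s) mod 2 = 0 \<longleftrightarrow> b"
  by auto

lemma nat_of_str_append: "nat_of_str (xs @ ys) = nat_of_str xs + 2 ^ length xs * nat_of_str ys"
  by (induction xs) (auto simp: algebra_simps)

definition tl_code :: "nat \<Rightarrow> nat" where
  "tl_code c = (c - 1) div 2"

definition drop_code :: "nat \<Rightarrow> nat \<Rightarrow> nat" where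
  "drop_code k c = (tl_code ^^ k) c"

definition length_code :: "nat \<Rightarrow> nat" where
  "length_code c = (LEAST k. drop_code k c = 0)"

definition append_code :: "nat \<Rightarrow> nat \<Rightarrow> nat" where
  "append_code a b = a + 2 ^ length_code a * b"

definition concat_code :: "(nat \<Rightarrow> nat) \<Rightarrow> nat \<Rightarrow> nat" where
  "concat_code f m = nat_of_str (concat (map (\<lambda>i. str_of_nat (f i)) [0..<m]))"

definition hd_bit_code :: "nat \<Rightarrow> bool" where
  "hd_bit_code d \<longleftrightarrow> d mod 2 = 0"

definition self_delim_code :: "nat \<Rightarrow> nat" where
  "self_delim_code c = append_code
     (concat_code (\<lambda>i. nat_of_str [hd_bit_code (drop_code i c), hd_bit_code (drop_code i c)]) (length_code c))
     (nat_of_str [False, True])"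

lemma nat_of_str_tl: "nat_of_str (tl s) = tl_code (nat_of_str s)"
  by (cases s) (auto simp: tl_code_def)

lemma nat_of_str_drop: "nat_of_str (drop k s) = drop_code k (nat_of_str s)"
proof (induction k arbitrary: s)
  case 0 then show ?case by (simp add: drop_code_def)
next
  case (Suc k)
  have "drop (Suc k) s = drop k (tl s)" by (simp add: drop_Suc)
  then show ?case using Suc[of "tl s"] by (simp add: drop_code_def funpow_swap1 nat_of_str_tl)
qed

lemma drop_code_zero: "drop_code k 0 = 0"
  using nat_of_str_drop[of k "[]"] by simp

lemma drop_code_large: "c \<le> k \<Longrightarrow> drop_code k c = 0"
  using nat_of_str_drop[of k "str_of_nat c"] length_le_nat_of_str[of "str_of_nat c"] by simp

lemma length_code_nat_of_str: "length_code (nat_of_str s) = length s"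
  unfolding length_code_def by (rule Least_equality) (auto simp flip: nat_of_str_drop)

lemma nat_of_str_append_code: "nat_of_str (xs @ ys) = append_code (nat_of_str xs) (nat_of_str ys)"
  by (simp add: append_code_def length_code_nat_of_str nat_of_str_append)

lemma hd_bit_code_Cons: "hd_bit_code (nat_of_str (b # t)) \<longleftrightarrow> b"
  unfolding hd_bit_code_def by (rule nat_of_str_Cons_even_iff)

lemma hd_bit_code_drop_code: "i < length w \<Longrightarrow> hd_bit_code (drop_code i (nat_of_str w)) = w ! i"
  by (metis Cons_nth_drop_Suc hd_bit_code_Cons nat_of_str_drop)

lemma self_delim_code_nat_of_str: "self_delim_code (nat_of_str w) = nat_of_str (self_delim w)"
proof -
  have "map (\<lambda>b. [b, b]) w = map (\<lambda>i. str_of_nat (nat_of_str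
      [hd_bit_code (drop_code i (nat_of_str w)), hd_bit_code (drop_code i (nat_of_str w))])) [0..<length w]"
    by (rule nth_equalityI) (auto simp del: nat_of_str.simps simp: hd_bit_code_drop_code)
  then show ?thesis unfolding self_delim_code_def self_delim_def concat_code_def
    by (simp only: length_code_nat_of_str nat_of_str_append_code)
qed

lemma str_of_self_delim_code: "str_of_nat (self_delim_code e) = self_delim (str_of_nat e)"
  using self_delim_code_nat_of_str[of "str_of_nat e"] by simp

lemma ucomputable_tl_code [ucomputable_intros]:
  "ucomputable T k a \<Longrightarrow> ucomputable T k (\<lambda>q xs. tl_code (a q xs))"
  unfolding tl_code_def by (intro ucomputable_intros)

lemma ucomputable_drop_code_nth: "ucomputable T 2 (\<lambda>q xs. drop_code (xs!0) (xs!1))"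
  by (rule ucomputable_rec2[where g="\<lambda>q a. a" and h="\<lambda>q n z a. tl_code z"])
     (intro ucomputable_intros, simp_all add: drop_code_def)+

lemma ucomputable_drop_code [ucomputable_intros]:
  "ucomputable T k a \<Longrightarrow> ucomputable T k b \<Longrightarrow> ucomputable T k (\<lambda>q xs. drop_code (a q xs) (b q xs))"
  by (rule ucomputable_lift2[OF ucomputable_drop_code_nth])

lemma ucomputable_length_code_nth: "ucomputable T 1 (\<lambda>q xs. length_code (xs!0))"
  unfolding length_code_def
  by (rule ucomputable_Least1[where P="\<lambda>q y a. drop_code y a = 0"])
     (auto intro!: ucomputable_intros drop_code_large)

lemma ucomputable_length_code [ucomputable_intros]:
  "ucomputable T k a \<Longrightarrow> ucomputable T k (\<lambda>q xs. length_code (a q xs))"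
  by (rule ucomputable_lift1[OF ucomputable_length_code_nth])

lemma ucomputable_append_code [ucomputable_intros]:
  "ucomputable T k a \<Longrightarrow> ucomputable T k b \<Longrightarrow> ucomputable T k (\<lambda>q xs. append_code (a q xs) (b q xs))"
  unfolding append_code_def by (intro ucomputable_intros)

fun concat_suffix_code :: "(nat \<Rightarrow> nat) \<Rightarrow> nat \<Rightarrow> nat \<Rightarrow> nat" where
  "concat_suffix_code f m 0 = 0"
| "concat_suffix_code f m (Suc k) = append_code (f (m - Suc k)) (concat_suffix_code f m k)"

lemma concat_suffix_code_eq:
  "k \<le> m \<Longrightarrow> concat_suffix_code f m k = nat_of_str (concat (map (\<lambda>i. str_of_nat (f i)) [m-k..<m]))"
proof (induction k)
  case 0 then show ?case by simp
next
  case (Suc k)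
  have "[m - Suc k..<m] = (m - Suc k) # [m - k..<m]"
    using Suc.prems by (simp add: upt_conv_Cons Suc_diff_Suc)
  then show ?case using Suc by (simp add: nat_of_str_append_code)
qed

lemma ucomputable_concat_code:
  assumes f: "ucomputable T 2 (\<lambda>q xs. f q (xs!0) (xs!1))"
  shows "ucomputable T 2 (\<lambda>q xs. concat_code (\<lambda>i. f q i (xs!1)) (xs!0))"
proof -
  have "ucomputable T 3 (\<lambda>q xs. (\<lambda>q k m a. concat_suffix_code (\<lambda>i. f q i a) m k) q (xs!0) (xs!1) (xs!2))"
  proof (rule ucomputable_rec3[where g="\<lambda>q m a. 0" and h="\<lambda>q n z m a. append_code (f q (m - Suc n) a) z"])
    show "ucomputable T 4 (\<lambda>q xs. append_code (f q (xs ! 2 - Suc (xs ! 0)) (xs ! 3)) (xs ! 1))"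
      by (intro ucomputable_append_code ucomputable_lift2[OF f] ucomputable_intros) simp_all
  qed (intro ucomputable_intros, simp_all)+
  then have "ucomputable T 2 (\<lambda>q xs. (\<lambda>q k m a. concat_suffix_code (\<lambda>i. f q i a) m k) q (xs!0) (xs!0) (xs!1))"
    by (rule ucomputable_lift3) (intro ucomputable_intros, simp)+
  then show ?thesis by (rule ucomputable_cong) (simp add: concat_suffix_code_eq concat_code_def)
qed

lemma udecidable_hd_bit_code [ucomputable_intros]:
  "ucomputable T k a \<Longrightarrow> udecidable T k (\<lambda>q xs. hd_bit_code (a q xs))"
  unfolding hd_bit_code_def by (intro ucomputable_intros)

lemma ucomputable_self_delim_code [ucomputable_intros]:
  "ucomputable T k a \<Longrightarrow> ucomputable T k (\<lambda>q xs. self_delim_code (a q xs))"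
proof (rule ucomputable_lift1[where f="\<lambda>q. self_delim_code"])
  have bits: "\<And>b. nat_of_str [b, b] = (if b then 6 else 3)" by simp
  have "ucomputable T 2 (\<lambda>q xs. concat_code (\<lambda>i. (\<lambda>q i c.
      nat_of_str [hd_bit_code (drop_code i c), hd_bit_code (drop_code i c)]) q i (xs!1)) (xs!0))"
    by (rule ucomputable_concat_code) (unfold bits, intro ucomputable_intros; simp)
  then have "ucomputable T 1 (\<lambda>q xs. (\<lambda>q a b. concat_code (\<lambda>i.
      nat_of_str [hd_bit_code (drop_code i b), hd_bit_code (drop_code i b)]) a) q (length_code (xs!0)) (xs!0))"
    by (rule ucomputable_lift2) (intro ucomputable_intros; simp)+
  then have "ucomputable T 1 (\<lambda>q xs. append_code (concat_code (\<lambda>i.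
      nat_of_str [hd_bit_code (drop_code i (xs!0)), hd_bit_code (drop_code i (xs!0))]) (length_code (xs!0)))
      (nat_of_str [False, True]))"
    by (intro ucomputable_intros) simp
  then show "ucomputable T 1 (\<lambda>q xs. self_delim_code (xs!0))"
    unfolding self_delim_code_def .
qed

text \<open>\<open>self_delim w\<close> doubles every bit of \<open>w\<close> and appends \<open>01\<close>, so a code starts with \<open>self_delim w\<close>
  for \<open>w\<close> of length \<open>j\<close> if its first \<open>j\<close> bit pairs are doubled and the next one is not.\<close>

definition doubled_code :: "nat \<Rightarrow> bool" where
  "doubled_code d \<longleftrightarrow> d \<noteq> 0 \<and> tl_code d \<noteq> 0 \<and> d mod 2 = tl_code d mod 2"

definition sd_length_code :: "nat \<Rightarrow> nat" where
  "sd_length_code s = (LEAST j. \<not> doubled_code (drop_code (2 * j) s))"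

definition sd_head_code :: "nat \<Rightarrow> nat" where
  "sd_head_code s = concat_code (\<lambda>i. nat_of_str [hd_bit_code (drop_code (2 * i) s)]) (sd_length_code s)"

definition sd_tail_code :: "nat \<Rightarrow> nat" where
  "sd_tail_code s = drop_code (2 * sd_length_code s + 2) s"

lemma doubled_code_Cons_Cons: "doubled_code (nat_of_str (b # c # t)) \<longleftrightarrow> b = c"
proof -
  have tl: "tl_code (nat_of_str (b # c # t)) = nat_of_str (c # t)"
    by (metis nat_of_str_tl list.sel(3))
  have "((x::nat) mod 2 = y mod 2) \<longleftrightarrow> ((x mod 2 = 0) \<longleftrightarrow> (y mod 2 = 0))" for x y
    by presburger
  then have "nat_of_str (b # c # t) mod 2 = tl_code (nat_of_str (b # c # t)) mod 2 \<longleftrightarrow> b = c"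
    unfolding tl by (simp only: nat_of_str_Cons_even_iff)
  then show ?thesis unfolding doubled_code_def using tl by simp
qed

lemma drop_double_bits:
  "i \<le> length w \<Longrightarrow> drop (2 * i) (concat (map (\<lambda>b. [b, b]) w) @ t) = concat (map (\<lambda>b. [b, b]) (drop i w)) @ t"
proof (induction w arbitrary: i)
  case (Cons b w)
  then show ?case by (cases i) auto
qed simp

lemma parse_self_delim:
  shows "sd_length_code (nat_of_str (self_delim w @ r)) = length w"
    and "sd_head_code (nat_of_str (self_delim w @ r)) = nat_of_str w"
    and "sd_tail_code (nat_of_str (self_delim w @ r)) = nat_of_str r"
proof -
  let ?s = "self_delim w @ r" and ?dbl = "\<lambda>w. concat (map (\<lambda>b. [b, b]) w)"
  have dr: "drop_code (2 * i) (nat_of_str ?s) = nat_of_str (?dbl (drop i w) @ [False, True] @ r)"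
    if "i \<le> length w" for i
    using drop_double_bits[OF that, of "[False, True] @ r"] by (simp add: self_delim_def flip: nat_of_str_drop)
  have pair: "drop_code (2 * i) (nat_of_str ?s) =
      nat_of_str (w ! i # w ! i # ?dbl (drop (Suc i) w) @ [False, True] @ r)"
    if "i < length w" for i
    using dr[of i] that by (simp add: Cons_nth_drop_Suc[symmetric])
  show length: "sd_length_code (nat_of_str ?s) = length w"
    unfolding sd_length_code_def
  proof (rule Least_equality)
    show "\<not> doubled_code (drop_code (2 * length w) (nat_of_str ?s))"
      using dr[of "length w"] doubled_code_Cons_Cons[of False True r] by simp
    show "length w \<le> j" if "\<not> doubled_code (drop_code (2 * j) (nat_of_str ?s))" for j
      using that pair doubled_code_Cons_Cons not_less by metis
  qed
  have "map (\<lambda>i. str_of_nat (nat_of_str [hd_bit_code (drop_code (2 * i) (nat_of_str ?s))])) [0..<length w]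
      = map (\<lambda>b. [b]) w"
    by (rule nth_equalityI) (auto simp del: nat_of_str.simps simp: pair hd_bit_code_Cons)
  moreover have "concat (map (\<lambda>b. [b]) w) = w" by (induction w) auto
  ultimately show "sd_head_code (nat_of_str ?s) = nat_of_str w"
    unfolding sd_head_code_def concat_code_def length by simp
  have "drop (2 * length w) ?s = [False, True] @ r"
    using drop_double_bits[of "length w" w "[False, True] @ r"] by (simp add: self_delim_def)
  then have "drop 2 (drop (2 * length w) ?s) = r" by simp
  then have "drop (2 * length w + 2) ?s = r" by (simp only: drop_drop add.commute)
  then show "sd_tail_code (nat_of_str ?s) = nat_of_str r"
    unfolding sd_tail_code_def length by (metis nat_of_str_drop)
qed

lemma udecidable_doubled_code [ucomputable_intros]:
  "ucomputable T k a \<Longrightarrow> udecidable T k (\<lambda>q xs. doubled_code (a q xs))"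
  unfolding doubled_code_def by (intro ucomputable_intros)

lemma ucomputable_sd_length_code [ucomputable_intros]:
  "ucomputable T k a \<Longrightarrow> ucomputable T k (\<lambda>q xs. sd_length_code (a q xs))"
proof (rule ucomputable_lift1[where f="\<lambda>q. sd_length_code"])
  have "\<exists>j. \<not> doubled_code (drop_code (2 * j) s)" for s
    by (rule exI[of _ s]) (simp add: drop_code_large doubled_code_def)
  then show "ucomputable T 1 (\<lambda>q xs. sd_length_code (xs!0))"
    unfolding sd_length_code_def
    by (intro ucomputable_Least1[where P="\<lambda>q y a. \<not> doubled_code (drop_code (2 * y) a)"])
       (intro ucomputable_intros; simp)+
qed

lemma ucomputable_sd_head_code [ucomputable_intros]:
  "ucomputable T k a \<Longrightarrow> ucomputable T k (\<lambda>q xs. sd_head_code (a q xs))"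
proof (rule ucomputable_lift1[where f="\<lambda>q. sd_head_code"])
  have bit: "\<And>b. nat_of_str [b] = (if b then 2 else 1)" by simp
  have "ucomputable T 2 (\<lambda>q xs. concat_code (\<lambda>i. (\<lambda>q i s.
      nat_of_str [hd_bit_code (drop_code (2 * i) s)]) q i (xs!1)) (xs!0))"
    by (rule ucomputable_concat_code) (unfold bit, intro ucomputable_intros; simp)
  then have "ucomputable T 1 (\<lambda>q xs. (\<lambda>q a b. concat_code (\<lambda>i.
      nat_of_str [hd_bit_code (drop_code (2 * i) b)]) a) q (sd_length_code (xs!0)) (xs!0))"
    by (rule ucomputable_lift2) (intro ucomputable_intros; simp)+
  then show "ucomputable T 1 (\<lambda>q xs. sd_head_code (xs!0))"
    unfolding sd_head_code_def by simp
qed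

lemma ucomputable_sd_tail_code [ucomputable_intros]:
  "ucomputable T k a \<Longrightarrow> ucomputable T k (\<lambda>q xs. sd_tail_code (a q xs))"
  unfolding sd_tail_code_def by (intro ucomputable_intros)

text \<open>The order on \<open>str\<close> is the lexicographic one, which \<open>enc_set\<close> uses to sort. It is decided from
  the back: \<open>lex_less_suffix_code j a b\<close> compares the suffixes from position \<open>a + b - j\<close> on, and
  \<open>a + b\<close> bounds both lengths.\<close>

definition lex_step_code :: "nat \<Rightarrow> nat \<Rightarrow> nat \<Rightarrow> nat" where
  "lex_step_code da db z =
     (if da = 0 then (if db = 0 then 0 else 1) else if db = 0 then 0
      else if hd_bit_code da = hd_bit_code db then z else if hd_bit_code db then 1 else 0)"

fun lex_less_suffix_code :: "nat \<Rightarrow> nat \<Rightarrow> nat \<Rightarrow> nat" where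
  "lex_less_suffix_code 0 a b = 0"
| "lex_less_suffix_code (Suc j) a b =
     lex_step_code (drop_code (a + b - Suc j) a) (drop_code (a + b - Suc j) b) (lex_less_suffix_code j a b)"

definition lex_less_code :: "nat \<Rightarrow> nat \<Rightarrow> nat" where
  "lex_less_code a b = lex_less_suffix_code (a + b) a b"

lemma lex_step_code_nat_of_str:
  "lex_step_code (nat_of_str xs) (nat_of_str ys) (if tl xs < tl ys then 1 else 0) = (if xs < ys then 1 else 0)"
  by (cases xs; cases ys) (auto simp del: nat_of_str.simps simp: lex_step_code_def hd_bit_code_Cons)

lemma lex_less_suffix_code_eq:
  "j \<le> a + b \<Longrightarrow> lex_less_suffix_code j a b =
     (if drop (a + b - j) (str_of_nat a) < drop (a + b - j) (str_of_nat b) then 1 else 0)"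
proof (induction j)
  case 0
  have "drop (a + b) (str_of_nat a) = []" "drop (a + b) (str_of_nat b) = []"
    using length_le_nat_of_str[of "str_of_nat a"] length_le_nat_of_str[of "str_of_nat b"] by auto
  then show ?case by simp
next
  case (Suc j)
  let ?k = "a + b - Suc j"
  have k: "a + b - j = Suc ?k" using Suc.prems by simp
  have tl_drop: "drop (Suc ?k) l = tl (drop ?k l)" for l :: str by (simp add: drop_Suc drop_tl)
  have "lex_less_suffix_code (Suc j) a b = lex_step_code (nat_of_str (drop ?k (str_of_nat a)))
      (nat_of_str (drop ?k (str_of_nat b))) (lex_less_suffix_code j a b)"
    by (simp add: nat_of_str_drop)
  also have "lex_less_suffix_code j a b =
      (if tl (drop ?k (str_of_nat a)) < tl (drop ?k (str_of_nat b)) then 1 else 0)"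
    using Suc k tl_drop by simp
  finally show ?case using lex_step_code_nat_of_str by simp
qed

lemma lex_less_code_eq: "lex_less_code a b = (if str_of_nat a < str_of_nat b then 1 else 0)"
  unfolding lex_less_code_def using lex_less_suffix_code_eq[of "a + b" a b] by simp

lemma ucomputable_lex_step_code [ucomputable_intros]:
  "ucomputable T k a \<Longrightarrow> ucomputable T k b \<Longrightarrow> ucomputable T k c \<Longrightarrow>
   ucomputable T k (\<lambda>q xs. lex_step_code (a q xs) (b q xs) (c q xs))"
  unfolding lex_step_code_def by (intro ucomputable_intros)

lemma ucomputable_lex_less_code_nth: "ucomputable T 2 (\<lambda>q xs. lex_less_code (xs!0) (xs!1))"
proof -
  have "ucomputable T 3 (\<lambda>q xs. (\<lambda>q j a b. lex_less_suffix_code j a b) q (xs!0) (xs!1) (xs!2))"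
    by (rule ucomputable_rec3[where g="\<lambda>q a b. 0"
          and h="\<lambda>q n z a b. lex_step_code (drop_code (a + b - Suc n) a) (drop_code (a + b - Suc n) b) z"])
       (simp_all, (intro ucomputable_intros; simp)+)
  then have "ucomputable T 2 (\<lambda>q xs. (\<lambda>q j a b. lex_less_suffix_code j a b) q (xs!0 + xs!1) (xs!0) (xs!1))"
    by (rule ucomputable_lift3) (intro ucomputable_intros; simp)+
  then show ?thesis unfolding lex_less_code_def by simp
qed

lemma udecidable_str_less [ucomputable_intros]:
  "ucomputable T k a \<Longrightarrow> ucomputable T k b \<Longrightarrow> udecidable T k (\<lambda>q xs. str_of_nat (a q xs) < str_of_nat (b q xs))"
proof -
  assume "ucomputable T k a" "ucomputable T k b"
  then have "ucomputable T k (\<lambda>q xs. 1 - lex_less_code (a q xs) (b q xs))"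
    by (intro ucomputable_intros ucomputable_lift2[OF ucomputable_lex_less_code_nth])
  then show ?thesis
    unfolding udecidable_def by (rule ucomputable_cong) (simp add: lex_less_code_eq)
qed

text \<open>A list of strings is coded by the concatenation of their self-delimited forms. Elements are
  read off at indices below the code itself, which bounds the length of the list.\<close>

definition sd_list_code :: "str list \<Rightarrow> nat" where
  "sd_list_code ws = nat_of_str (concat (map self_delim ws))"

definition sd_drop_code :: "nat \<Rightarrow> nat \<Rightarrow> nat" where
  "sd_drop_code i L = (sd_tail_code ^^ i) L"

definition sd_nth_code :: "nat \<Rightarrow> nat \<Rightarrow> nat" where
  "sd_nth_code i L = sd_head_code (sd_drop_code i L)"

definition sd_valid_code :: "nat \<Rightarrow> nat \<Rightarrow> bool" where
  "sd_valid_code i L \<longleftrightarrow> sd_drop_code i L \<noteq> 0"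

definition sd_elems :: "nat \<Rightarrow> nat set" where
  "sd_elems L = {sd_nth_code i L | i. i < L \<and> sd_valid_code i L}"

lemma finite_sd_elems: "finite (sd_elems L)"
  unfolding sd_elems_def by simp

lemma length_self_delim: "length (self_delim w) = 2 * length w + 2"
  unfolding self_delim_def by (induction w) auto

lemma sd_drop_code_sd_list_code:
  "i \<le> length ws \<Longrightarrow> sd_drop_code i (sd_list_code ws) = sd_list_code (drop i ws)"
proof (induction i)
  case 0 then show ?case by (simp add: sd_drop_code_def)
next
  case (Suc i)
  have "drop i ws = ws ! i # drop (Suc i) ws" using Suc.prems by (simp add: Cons_nth_drop_Suc)
  then have "sd_drop_code i (sd_list_code ws) =
      nat_of_str (self_delim (ws ! i) @ concat (map self_delim (drop (Suc i) ws)))"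
    using Suc by (simp add: sd_list_code_def)
  then show ?case by (simp add: sd_drop_code_def parse_self_delim sd_list_code_def)
qed

lemma sd_drop_code_sd_list_code_large: "length ws \<le> i \<Longrightarrow> sd_drop_code i (sd_list_code ws) = 0"
proof -
  assume "length ws \<le> i"
  then obtain d where i: "i = length ws + d" by (metis le_add_diff_inverse)
  have "sd_drop_code (length ws) (sd_list_code ws) = 0"
    using sd_drop_code_sd_list_code[of "length ws" ws] by (simp add: sd_list_code_def)
  moreover have "sd_tail_code 0 = 0" by (simp add: sd_tail_code_def drop_code_zero)
  ultimately show ?thesis unfolding i by (induction d) (auto simp: sd_drop_code_def)
qed

lemma sd_nth_code_sd_list_code:
  assumes "i < length ws"
  shows "sd_nth_code i (sd_list_code ws) = nat_of_str (ws ! i)" and "sd_valid_code i (sd_list_code ws)"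
proof -
  have "drop i ws = ws ! i # drop (Suc i) ws" using assms by (simp add: Cons_nth_drop_Suc)
  then have "sd_drop_code i (sd_list_code ws) =
      nat_of_str (self_delim (ws ! i) @ concat (map self_delim (drop (Suc i) ws)))"
    using sd_drop_code_sd_list_code[of i ws] assms by (simp add: sd_list_code_def)
  then show "sd_nth_code i (sd_list_code ws) = nat_of_str (ws ! i)" "sd_valid_code i (sd_list_code ws)"
    unfolding sd_nth_code_def sd_valid_code_def by (simp add: parse_self_delim, simp add: self_delim_def)
qed

lemma length_le_sd_list_code: "length ws \<le> sd_list_code ws"
proof -
  have "length ws \<le> length (concat (map self_delim ws))"
    by (induction ws) (auto simp: length_self_delim)
  then show ?thesis unfolding sd_list_code_def using length_le_nat_of_str le_trans by blast
qed

lemma sd_elems_sd_list_code: "sd_elems (sd_list_code ws) = nat_of_str ` set ws"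
proof
  show "sd_elems (sd_list_code ws) \<subseteq> nat_of_str ` set ws"
  proof
    fix e assume "e \<in> sd_elems (sd_list_code ws)"
    then obtain i where e: "e = sd_nth_code i (sd_list_code ws)" and "sd_valid_code i (sd_list_code ws)"
      unfolding sd_elems_def by auto
    then have "i < length ws"
      using sd_drop_code_sd_list_code_large[of ws i] unfolding sd_valid_code_def by (meson not_le)
    then show "e \<in> nat_of_str ` set ws" using e sd_nth_code_sd_list_code by auto
  qed
  show "nat_of_str ` set ws \<subseteq> sd_elems (sd_list_code ws)"
  proof
    fix e assume "e \<in> nat_of_str ` set ws"
    then obtain i where i: "i < length ws" and e: "e = nat_of_str (ws ! i)" by (auto simp: in_set_conv_nth)
    moreover have "i < sd_list_code ws" using i length_le_sd_list_code[of ws] by simp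
    ultimately show "e \<in> sd_elems (sd_list_code ws)"
      unfolding sd_elems_def using sd_nth_code_sd_list_code[OF i] by force
  qed
qed

lemma ucomputable_sd_drop_code [ucomputable_intros]:
  "ucomputable T k a \<Longrightarrow> ucomputable T k b \<Longrightarrow> ucomputable T k (\<lambda>q xs. sd_drop_code (a q xs) (b q xs))"
proof (rule ucomputable_lift2[where f="\<lambda>q. sd_drop_code"])
  show "ucomputable T 2 (\<lambda>q xs. sd_drop_code (xs!0) (xs!1))"
    by (rule ucomputable_rec2[where g="\<lambda>q a. a" and h="\<lambda>q n z a. sd_tail_code z"])
       (simp_all add: sd_drop_code_def, (intro ucomputable_intros; simp)+)
qed

lemma ucomputable_sd_nth_code [ucomputable_intros]:
  "ucomputable T k a \<Longrightarrow> ucomputable T k b \<Longrightarrow> ucomputable T k (\<lambda>q xs. sd_nth_code (a q xs) (b q xs))"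
  unfolding sd_nth_code_def by (intro ucomputable_intros)

lemma udecidable_sd_valid_code [ucomputable_intros]:
  "ucomputable T k a \<Longrightarrow> ucomputable T k b \<Longrightarrow> udecidable T k (\<lambda>q xs. sd_valid_code (a q xs) (b q xs))"
  unfolding sd_valid_code_def by (intro ucomputable_intros)

section \<open>Sorting a list of codes\<close>

text \<open>\<open>next_elem lo L\<close> is \<open>1 +\<close> the code of the least element of the list coded by \<open>L\<close> that is
  above \<open>str_of_nat (lo - 1)\<close>, where \<open>lo = 0\<close> means no lower bound and the result \<open>0\<close> means that
  there is no such element. Iterating it enumerates the elements in increasing order.\<close>

fun next_elem_upto :: "nat \<Rightarrow> nat \<Rightarrow> nat \<Rightarrow> nat" where
  "next_elem_upto 0 lo L = 0"
| "next_elem_upto (Suc k) lo L =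
     (if sd_valid_code k L \<and> (lo = 0 \<or> str_of_nat (lo - 1) < str_of_nat (sd_nth_code k L)) \<and>
         (next_elem_upto k lo L = 0 \<or> str_of_nat (sd_nth_code k L) < str_of_nat (next_elem_upto k lo L - 1))
      then sd_nth_code k L + 1 else next_elem_upto k lo L)"

definition next_elem :: "nat \<Rightarrow> nat \<Rightarrow> nat" where
  "next_elem lo L = next_elem_upto L lo L"

fun sorted_elem :: "nat \<Rightarrow> nat \<Rightarrow> nat" where
  "sorted_elem 0 L = next_elem 0 L"
| "sorted_elem (Suc i) L = (if sorted_elem i L = 0 then 0 else next_elem (sorted_elem i L) L)"

definition sort_code :: "nat \<Rightarrow> nat" where
  "sort_code L = concat_code (\<lambda>i. if sorted_elem i L = 0 then 0 else self_delim_code (sorted_elem i L - 1)) L"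

definition next_candidates :: "nat \<Rightarrow> nat \<Rightarrow> nat \<Rightarrow> str set" where
  "next_candidates k lo L = {str_of_nat (sd_nth_code i L) | i.
     i < k \<and> sd_valid_code i L \<and> (lo = 0 \<or> str_of_nat (lo - 1) < str_of_nat (sd_nth_code i L))}"

lemma next_candidates_Suc:
  "next_candidates (Suc k) lo L = next_candidates k lo L \<union>
     (if sd_valid_code k L \<and> (lo = 0 \<or> str_of_nat (lo - 1) < str_of_nat (sd_nth_code k L))
      then {str_of_nat (sd_nth_code k L)} else {})"
  unfolding next_candidates_def by (auto simp: less_Suc_eq)

lemma finite_next_candidates: "finite (next_candidates k lo L)"
proof -
  have "next_candidates k lo L \<subseteq> (\<lambda>i. str_of_nat (sd_nth_code i L)) ` {..<k}"
    unfolding next_candidates_def by auto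
  then show ?thesis by (rule finite_subset) simp
qed

lemma next_elem_upto_eq:
  "next_elem_upto k lo L =
     (if next_candidates k lo L = {} then 0 else nat_of_str (Min (next_candidates k lo L)) + 1)"
proof (induction k)
  case 0 then show ?case by (simp add: next_candidates_def)
next
  case (Suc k)
  let ?C = "next_candidates k lo L"
    and ?c = "sd_valid_code k L \<and> (lo = 0 \<or> str_of_nat (lo - 1) < str_of_nat (sd_nth_code k L))"
  show ?case
  proof (cases ?c)
    case False
    then have "next_elem_upto (Suc k) lo L = next_elem_upto k lo L"
      by (simp only: next_elem_upto.simps(2) conj_assoc) (metis (full_types))
    moreover have "next_candidates (Suc k) lo L = ?C"
      unfolding next_candidates_Suc if_not_P[OF False] by simp
    ultimately show ?thesis using Suc by simp
  next
    case c: True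
    show ?thesis
    proof (cases "?C = {}")
      case True
      then show ?thesis using Suc c by (simp add: next_candidates_Suc)
    next
      case False
      have "Min (insert (str_of_nat (sd_nth_code k L)) ?C) = min (str_of_nat (sd_nth_code k L)) (Min ?C)"
        using finite_next_candidates False by (rule Min_insert)
      then show ?thesis using Suc c False by (auto simp: next_candidates_Suc min_def)
    qed
  qed
qed

lemma next_elem_eq:
  "next_elem lo L =
     (if {e \<in> str_of_nat ` sd_elems L. lo = 0 \<or> str_of_nat (lo - 1) < e} = {} then 0
      else nat_of_str (Min {e \<in> str_of_nat ` sd_elems L. lo = 0 \<or> str_of_nat (lo - 1) < e}) + 1)"
proof -
  have "next_candidates L lo L = {e \<in> str_of_nat ` sd_elems L. lo = 0 \<or> str_of_nat (lo - 1) < e}"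
    unfolding next_candidates_def sd_elems_def by auto
  then show ?thesis unfolding next_elem_def next_elem_upto_eq by (simp only:)
qed

lemma sorted_wrt_greater_nth:
  assumes "sorted_wrt (<) (xs :: 'a :: linorder list)" "i < length xs"
  shows "{e \<in> set xs. xs ! i < e} = set (drop (Suc i) xs)"
proof
  show "{e \<in> set xs. xs ! i < e} \<subseteq> set (drop (Suc i) xs)"
  proof
    fix e assume "e \<in> {e \<in> set xs. xs ! i < e}"
    then obtain j where j: "j < length xs" "e = xs ! j" "xs ! i < xs ! j" by (auto simp: in_set_conv_nth)
    have "i < j"
    proof (rule ccontr)
      assume "\<not> i < j"
      then have "j = i \<or> j < i" by auto
      then show False using j sorted_wrt_nth_less[OF assms(1), of j i] assms(2) by auto
    qed
    then show "e \<in> set (drop (Suc i) xs)" using j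
      by (auto simp: in_set_conv_nth intro!: exI[of _ "j - Suc i"])
  qed
  show "set (drop (Suc i) xs) \<subseteq> {e \<in> set xs. xs ! i < e}"
  proof
    fix e assume "e \<in> set (drop (Suc i) xs)"
    then obtain j where "j < length xs - Suc i" "e = xs ! (Suc i + j)" by (auto simp: in_set_conv_nth)
    then show "e \<in> {e \<in> set xs. xs ! i < e}"
      using sorted_wrt_nth_less[OF assms(1), of i "Suc i + j"] by auto
  qed
qed

lemma Min_set_sorted_wrt:
  assumes "sorted_wrt (<) (xs :: 'a :: linorder list)" "i < length xs"
  shows "Min (set (drop i xs)) = xs ! i"
proof -
  have "drop i xs = xs ! i # drop (Suc i) xs" using assms(2) by (simp add: Cons_nth_drop_Suc)
  moreover have "xs ! i \<le> b" if "b \<in> set (drop (Suc i) xs)" for b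
  proof -
    have "b \<in> {e \<in> set xs. xs ! i < e}" using that sorted_wrt_greater_nth[OF assms] by simp
    then show ?thesis by (simp add: less_imp_le)
  qed
  ultimately show ?thesis by (simp add: Min_insert2)
qed

lemma sorted_elem_eq:
  assumes xs: "xs = sorted_list_of_set (str_of_nat ` sd_elems L)"
  shows "sorted_elem i L = (if i < length xs then nat_of_str (xs ! i) + 1 else 0)"
proof -
  have "finite (str_of_nat ` sd_elems L)" by (simp add: finite_sd_elems)
  then have set_xs: "set xs = str_of_nat ` sd_elems L" and sorted: "sorted_wrt (<) xs"
    unfolding xs by auto
  show ?thesis
  proof (induction i)
    case 0
    show ?case
      using next_elem_eq[of 0 L] Min_set_sorted_wrt[OF sorted, of 0] by (simp add: set_xs[symmetric])
  next
    case (Suc i)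
    show ?case
    proof (cases "i < length xs")
      case True
      have "{e \<in> set xs. xs ! i < e} = set (drop (Suc i) xs)" by (rule sorted_wrt_greater_nth[OF sorted True])
      then show ?thesis
        using Suc True next_elem_eq[of "nat_of_str (xs ! i) + 1" L] Min_set_sorted_wrt[OF sorted, of "Suc i"]
        by (simp add: set_xs[symmetric])
    qed (use Suc in simp)
  qed
qed

lemma sort_code_eq: "sort_code L = nat_of_str (enc_set (str_of_nat ` sd_elems L))"
proof -
  define xs where "xs = sorted_list_of_set (str_of_nat ` sd_elems L)"
  have "length xs \<le> L"
  proof -
    have "set xs \<subseteq> (\<lambda>i. str_of_nat (sd_nth_code i L)) ` {..<L}"
      unfolding xs_def sd_elems_def by (auto simp: finite_sd_elems[unfolded sd_elems_def])
    then have "card (set xs) \<le> L"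
      by (metis card_image_le card_lessThan card_mono finite_imageI finite_lessThan le_trans)
    moreover have "distinct xs" unfolding xs_def by simp
    ultimately show ?thesis by (simp add: distinct_card)
  qed
  then have "[0..<L] = [0..<length xs] @ [length xs..<L]"
    by (metis le0 upt_add_eq_append le_add_diff_inverse)
  then have "map (\<lambda>i. str_of_nat (if sorted_elem i L = 0 then 0
      else self_delim_code (sorted_elem i L - 1))) [0..<L]
      = map (\<lambda>i. self_delim (xs ! i)) [0..<length xs] @ map (\<lambda>i. []) [length xs..<L]"
    by (simp add: sorted_elem_eq[OF xs_def] str_of_self_delim_code)
  moreover have "map (\<lambda>i. self_delim (xs ! i)) [0..<length xs] = map self_delim xs"
    by (rule nth_equalityI) auto
  ultimately have "concat (map (\<lambda>i. str_of_nat (if sorted_elem i L = 0 then 0 else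
      self_delim_code (sorted_elem i L - 1))) [0..<L]) = concat (map self_delim xs)"
    by simp
  then show ?thesis unfolding sort_code_def concat_code_def enc_set_def xs_def by simp
qed

lemma ucomputable_next_elem [ucomputable_intros]:
  "ucomputable T k a \<Longrightarrow> ucomputable T k b \<Longrightarrow> ucomputable T k (\<lambda>q xs. next_elem (a q xs) (b q xs))"
  unfolding next_elem_def
proof (rule ucomputable_lift3[where f="\<lambda>q. next_elem_upto"])
  show "ucomputable T 3 (\<lambda>q xs. next_elem_upto (xs!0) (xs!1) (xs!2))"
    by (rule ucomputable_rec3[where f="\<lambda>q. next_elem_upto" and g="\<lambda>q a b. 0"
          and h="\<lambda>q k z lo L. (if sd_valid_code k L \<and> (lo = 0 \<or> str_of_nat (lo - 1) < str_of_nat (sd_nth_code k L)) \<and>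
            (z = 0 \<or> str_of_nat (sd_nth_code k L) < str_of_nat (z - 1)) then sd_nth_code k L + 1 else z)"])
       (simp_all, (intro ucomputable_intros; simp)+)
qed

lemma ucomputable_sorted_elem [ucomputable_intros]:
  "ucomputable T k a \<Longrightarrow> ucomputable T k b \<Longrightarrow> ucomputable T k (\<lambda>q xs. sorted_elem (a q xs) (b q xs))"
proof (rule ucomputable_lift2[where f="\<lambda>q. sorted_elem"])
  show "ucomputable T 2 (\<lambda>q xs. sorted_elem (xs!0) (xs!1))"
    by (rule ucomputable_rec2[where f="\<lambda>q. sorted_elem" and g="\<lambda>q L. next_elem 0 L"
          and h="\<lambda>q n z L. if z = 0 then 0 else next_elem z L"])
       (simp_all, (intro ucomputable_intros; simp)+)
qed

lemma ucomputable_sort_code [ucomputable_intros]: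
  "ucomputable T k a \<Longrightarrow> ucomputable T k (\<lambda>q xs. sort_code (a q xs))"
proof (rule ucomputable_lift1[where f="\<lambda>q. sort_code"])
  have "ucomputable T 2 (\<lambda>q xs. concat_code (\<lambda>i. (\<lambda>q i L.
      if sorted_elem i L = 0 then 0 else self_delim_code (sorted_elem i L - 1)) q i (xs!1)) (xs!0))"
    by (rule ucomputable_concat_code) (intro ucomputable_intros; simp)
  then have "ucomputable T 1 (\<lambda>q xs. (\<lambda>q a b. concat_code (\<lambda>i.
      if sorted_elem i b = 0 then 0 else self_delim_code (sorted_elem i b - 1)) a) q (xs!0) (xs!0))"
    by (rule ucomputable_lift2) (intro ucomputable_intros; simp)+
  then show "ucomputable T 1 (\<lambda>q xs. sort_code (xs!0))" unfolding sort_code_def by simp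
qed

text \<open>Here \<open>dec p\<close> is the program \<open>p\<close> acting on codes. \<open>cell_of dec p t\<close> is the set of elements of the
  list coded by \<open>t\<close> that \<open>p\<close> maps back to \<open>t\<close>, and \<open>cells_code\<close> lists these sets for the outputs
  of \<open>p\<close> on all strings of length \<open>n\<close>, i.e. on the codes in \<open>[2^n - 1, 2^(n+1) - 1)\<close>.\<close>

definition filter_code :: "(nat \<Rightarrow> nat \<Rightarrow> nat) \<Rightarrow> nat \<Rightarrow> nat \<Rightarrow> nat" where
  "filter_code dec p t = concat_code (\<lambda>i.
     if sd_valid_code i t \<and> dec p (sd_nth_code i t) = t then self_delim_code (sd_nth_code i t) else 0) t"

definition cell_code :: "(nat \<Rightarrow> nat \<Rightarrow> nat) \<Rightarrow> nat \<Rightarrow> nat \<Rightarrow> nat" where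
  "cell_code dec p t = sort_code (filter_code dec p t)"

definition cells_list_code :: "(nat \<Rightarrow> nat \<Rightarrow> nat) \<Rightarrow> nat \<Rightarrow> nat \<Rightarrow> nat" where
  "cells_list_code dec p n =
     concat_code (\<lambda>i. self_delim_code (cell_code dec p (dec p (2 ^ n - 1 + i)))) (2 ^ n)"

definition cells_code :: "(nat \<Rightarrow> nat \<Rightarrow> nat) \<Rightarrow> nat \<Rightarrow> nat \<Rightarrow> nat" where
  "cells_code dec p n = sort_code (cells_list_code dec p n)"

definition cell_of :: "(nat \<Rightarrow> nat \<Rightarrow> nat) \<Rightarrow> nat \<Rightarrow> nat \<Rightarrow> str set" where
  "cell_of dec p t = str_of_nat ` {e \<in> sd_elems t. dec p e = t}"

lemma sd_elems_filter_code: "sd_elems (filter_code dec p t) = {e \<in> sd_elems t. dec p e = t}"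
proof -
  let ?P = "\<lambda>i. sd_valid_code i t \<and> dec p (sd_nth_code i t) = t"
  have "concat (map (\<lambda>i. if ?P i then self_delim (str_of_nat (sd_nth_code i t)) else []) is) =
      concat (map self_delim (map (\<lambda>i. str_of_nat (sd_nth_code i t)) (filter ?P is)))" for "is"
    by (induction "is") auto
  then have "filter_code dec p t =
      sd_list_code (map (\<lambda>i. str_of_nat (sd_nth_code i t)) (filter ?P [0..<t]))"
    unfolding filter_code_def concat_code_def sd_list_code_def
    by (simp add: if_distrib[of str_of_nat] str_of_self_delim_code cong: if_cong)
  then have "sd_elems (filter_code dec p t) = {sd_nth_code i t | i. i < t \<and> ?P i}"
    by (auto simp: sd_elems_sd_list_code image_iff)
  moreover have "{sd_nth_code i t | i. i < t \<and> ?P i} = {e \<in> sd_elems t. dec p e = t}"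
    unfolding sd_elems_def by blast
  ultimately show ?thesis by simp
qed

lemma cell_code_eq: "cell_code dec p t = nat_of_str (enc_set (cell_of dec p t))"
  unfolding cell_code_def cell_of_def by (simp add: sort_code_eq sd_elems_filter_code)

lemma cells_code_eq:
  "cells_code dec p n =
     nat_of_str (enc_set (enc_set ` (\<lambda>z. cell_of dec p (dec p z)) ` {2 ^ n - 1 ..< 2 ^ n - 1 + 2 ^ n}))"
proof -
  have "cells_list_code dec p n =
      sd_list_code (map (\<lambda>i. str_of_nat (cell_code dec p (dec p (2 ^ n - 1 + i)))) [0..<2 ^ n])"
    unfolding cells_list_code_def concat_code_def sd_list_code_def
    by (simp add: str_of_self_delim_code comp_def)
  then have "sd_elems (cells_list_code dec p n) = (\<lambda>i. cell_code dec p (dec p (2 ^ n - 1 + i))) ` {0..<2 ^ n}"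
    by (simp add: sd_elems_sd_list_code image_image)
  also have "\<dots> = (\<lambda>z. cell_code dec p (dec p z)) ` {2 ^ n - 1 ..< 2 ^ n - 1 + 2 ^ n}"
  proof -
    have shift: "plus (2 ^ n - 1) ` {0..<2 ^ n} = {2 ^ n - 1 ..< 2 ^ n - 1 + (2::nat) ^ n}"
      using image_add_atLeastLessThan[of "2 ^ n - 1 :: nat" 0 "2 ^ n"] by (simp only: add_0 add.commute)
    show ?thesis by (simp only: image_image flip: shift)
  qed
  finally show ?thesis unfolding cells_code_def by (simp add: sort_code_eq cell_code_eq image_image)
qed

locale program_calls =
  fixes dec :: "nat \<Rightarrow> nat \<Rightarrow> nat" and total_code :: "nat \<Rightarrow> bool"
    and T :: "nat \<Rightarrow> bool" and prog :: "nat \<Rightarrow> nat"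
  assumes dec_computable: "\<exists>r. \<forall>c b. total_code c \<longrightarrow> eval r [c, b] (dec c b)"
    and total_prog: "\<And>q. T q \<Longrightarrow> total_code (prog q)"
    and ucomputable_prog: "\<And>k. ucomputable T k (\<lambda>q xs. prog q)"
begin

lemma ucomputable_dec [ucomputable_intros]:
  "ucomputable T k b \<Longrightarrow> ucomputable T k (\<lambda>q xs. dec (prog q) (b q xs))"
  using dec_computable ucomputable_call[where P = total_code, OF _ ucomputable_prog]
  by (metis total_prog)

lemma ucomputable_filter_code_nth: "ucomputable T 1 (\<lambda>q xs. filter_code dec (prog q) (xs!0))"
proof -
  have "ucomputable T 2 (\<lambda>q xs. concat_code (\<lambda>i. (\<lambda>q i t.
      if sd_valid_code i t \<and> dec (prog q) (sd_nth_code i t) = t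
      then self_delim_code (sd_nth_code i t) else 0) q i (xs!1)) (xs!0))"
    by (rule ucomputable_concat_code) (intro ucomputable_intros; simp)
  then have "ucomputable T 1 (\<lambda>q xs. (\<lambda>q a b. concat_code (\<lambda>i.
      if sd_valid_code i b \<and> dec (prog q) (sd_nth_code i b) = b
      then self_delim_code (sd_nth_code i b) else 0) a) q (xs!0) (xs!0))"
    by (rule ucomputable_lift2) (intro ucomputable_intros; simp)+
  then show ?thesis unfolding filter_code_def by simp
qed

lemma ucomputable_cell_code [ucomputable_intros]:
  "ucomputable T k a \<Longrightarrow> ucomputable T k (\<lambda>q xs. cell_code dec (prog q) (a q xs))"
  unfolding cell_code_def by (intro ucomputable_intros ucomputable_lift1[OF ucomputable_filter_code_nth])

lemma ucomputable_cells_list_code_nth: "ucomputable T 1 (\<lambda>q xs. cells_list_code dec (prog q) (xs!0))"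
proof -
  have "ucomputable T 2 (\<lambda>q xs. concat_code (\<lambda>i. (\<lambda>q i n.
      self_delim_code (cell_code dec (prog q) (dec (prog q) (2 ^ n - 1 + i)))) q i (xs!1)) (xs!0))"
    by (rule ucomputable_concat_code) (intro ucomputable_intros; simp)
  then have "ucomputable T 1 (\<lambda>q xs. (\<lambda>q a b. concat_code (\<lambda>i.
      self_delim_code (cell_code dec (prog q) (dec (prog q) (2 ^ b - 1 + i)))) a) q (2 ^ (xs!0)) (xs!0))"
    by (rule ucomputable_lift2) (intro ucomputable_intros; simp)+
  then show ?thesis unfolding cells_list_code_def by simp
qed

lemma ucomputable_cells_code [ucomputable_intros]:
  "ucomputable T k a \<Longrightarrow> ucomputable T k (\<lambda>q xs. cells_code dec (prog q) (a q xs))"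
  unfolding cells_code_def by (intro ucomputable_intros ucomputable_lift1[OF ucomputable_cells_list_code_nth])

end

inductive_cases eval_ZfE: "eval Zf xs y"
inductive_cases eval_SfE: "eval Sf xs y"
inductive_cases eval_ProjE: "eval (Proj i) xs y"
inductive_cases eval_CompE: "eval (Comp f gs) xs y"
inductive_cases eval_Prim0E: "eval (Prim g h) (0 # xs) y"
inductive_cases eval_PrimSE: "eval (Prim g h) (Suc k # xs) y"
inductive_cases eval_MnE: "eval (Mn f) xs y"

lemma eval_deterministic: "eval f xs v \<Longrightarrow> eval f xs w \<Longrightarrow> v = w"
proof (induction arbitrary: w rule: eval.induct)
  case (eval_Z xs)
  then show ?case by (auto elim: eval_ZfE)
next
  case (eval_S x xs)
  then show ?case by (auto elim: eval_SfE)
next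
  case (eval_Proj i xs)
  from eval_Proj.prems show ?case by (auto elim: eval_ProjE)
next
  case (eval_Comp xs gs vs f y)
  from eval_Comp.prems obtain vs' where a: "list_all2 (\<lambda>g v. eval g xs v) gs vs'" and b: "eval f vs' w"
    by (rule eval_CompE)
  have l: "length vs = length vs'"
    using list_all2_lengthD[OF eval_Comp.IH(1)] list_all2_lengthD[OF a] by simp
  have "vs = vs'"
  proof (rule nth_equalityI[OF l])
    fix i assume i: "i < length vs"
    then have i': "i < length gs" using list_all2_lengthD[OF eval_Comp.IH(1)] by simp
    have "eval (gs ! i) xs (vs ! i) \<and> (\<forall>x. eval (gs ! i) xs x \<longrightarrow> vs ! i = x)"
      using list_all2_nthD[OF eval_Comp.IH(1) i'] by simp
    moreover have "eval (gs ! i) xs (vs' ! i)" using list_all2_nthD[OF a i'] by simp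
    ultimately show "vs ! i = vs' ! i" by blast
  qed
  then show ?case using eval_Comp.IH(2) b by simp
next
  case (eval_Prim0 g xs y h)
  from eval_Prim0.prems show ?case by (rule eval_Prim0E) (rule eval_Prim0.IH)
next
  case (eval_PrimS g h k xs z y)
  from eval_PrimS.prems obtain z' where "eval (Prim g h) (k # xs) z'" "eval h (k # z' # xs) w"
    by (rule eval_PrimSE)
  then show ?case using eval_PrimS.IH by metis
next
  case (eval_Mn f y xs)
  from eval_Mn.prems obtain a: "eval f (w # xs) 0" and b: "\<forall>z<w. \<exists>v. eval f (z # xs) v \<and> 0 < v"
    by (rule eval_MnE)
  show ?case
  proof (rule ccontr)
    assume "y \<noteq> w"
    then have "y < w \<or> w < y" by auto
    then show False
    proof
      assume "y < w"
      then obtain v where "eval f (y # xs) v" "0 < v" using b by blast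
      then show False using eval_Mn.IH(1) by force
    next
      assume "w < y"
      then obtain v where "eval f (w # xs) v" "0 < v" "\<forall>u. eval f (w # xs) u \<longrightarrow> v = u"
        using eval_Mn.IH(2) by blast
      then show False using a by force
    qed
  qed
qed

definition decompressor_of :: "recf \<Rightarrow> str \<Rightarrow> str \<Rightarrow> str option" where
  "decompressor_of r p x =
     (if \<exists>v. eval r [nat_of_str p, nat_of_str x] v
      then Some (str_of_nat (THE v. eval r [nat_of_str p, nat_of_str x] v)) else None)"

lemma decompressor_of_eq_Some_iff:
  "decompressor_of r p x = Some y \<longleftrightarrow> eval r [nat_of_str p, nat_of_str x] (nat_of_str y)"
proof
  assume "decompressor_of r p x = Some y"
  then obtain v where v: "eval r [nat_of_str p, nat_of_str x] v"
    and y: "y = str_of_nat (THE v. eval r [nat_of_str p, nat_of_str x] v)"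
    unfolding decompressor_of_def by (auto split: if_splits)
  then have "(THE v. eval r [nat_of_str p, nat_of_str x] v) = v" using eval_deterministic by blast
  then show "eval r [nat_of_str p, nat_of_str x] (nat_of_str y)" using v y by simp
next
  assume e: "eval r [nat_of_str p, nat_of_str x] (nat_of_str y)"
  then have "(THE v. eval r [nat_of_str p, nat_of_str x] v) = nat_of_str y"
    using eval_deterministic by blast
  then show "decompressor_of r p x = Some y" using e unfolding decompressor_of_def by auto
qed

lemma computable2_decompressor_of: "computable2 (decompressor_of r)"
  unfolding computable2_def using decompressor_of_eq_Some_iff by blast

lemma ucomputable_decompressor_of:
  assumes "ucomputable T 1 g"
  shows "\<exists>r. \<forall>p x. T (nat_of_str p) \<longrightarrow>
    decompressor_of r p x = Some (str_of_nat (g (nat_of_str p) [nat_of_str x]))"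
proof -
  obtain r where r: "\<And>q xs. T q \<Longrightarrow> length xs = 1 \<Longrightarrow> eval r (xs @ [q]) (g q xs)"
    using assms unfolding ucomputable_def by blast
  have "eval (Comp r [Proj 1, Proj 0]) [nat_of_str p, nat_of_str x] (g (nat_of_str p) [nat_of_str x])"
    if "T (nat_of_str p)" for p x
    using r[OF that, of "[nat_of_str x]"]
    by (intro eval_Comp[where vs="[nat_of_str x, nat_of_str p]"])
       (auto intro: eval_Proj[of 1 "[nat_of_str p, nat_of_str x]", simplified]
         eval_Proj[of 0 "[nat_of_str p, nat_of_str x]", simplified])
  then show ?thesis by (auto simp: decompressor_of_eq_Some_iff)
qed

lemma CT_le_length: "(\<forall>z. D q z \<noteq> None) \<Longrightarrow> D q x = Some y \<Longrightarrow> CT D y x \<le> length q"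
  unfolding CT_def by (rule Least_le) blast

lemma KC_le_length: "D q [] = Some y \<Longrightarrow> KC D y \<le> length q"
  unfolding KC_def by (rule Least_le) blast

lemma two_power_length_le_Suc_nat_of_str: "2 ^ length w \<le> nat_of_str w + 1"
  by (induction w) auto

lemma nat_of_str_less_two_power: "nat_of_str w + 2 \<le> 2 ^ (length w + 1)"
  by (induction w) auto

lemma nat_of_str_image_length: "nat_of_str ` {z. length z = n} = {2 ^ n - 1 ..< 2 ^ n - 1 + 2 ^ n}"
proof (rule card_subset_eq)
  show "nat_of_str ` {z. length z = n} \<subseteq> {2 ^ n - 1 ..< 2 ^ n - 1 + 2 ^ n}"
  proof
    fix m assume "m \<in> nat_of_str ` {z. length z = n}"
    then obtain z where "length z = n" "m = nat_of_str z" by blast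
    then have "2 ^ n \<le> m + 1" "m + 2 \<le> 2 * 2 ^ n"
      using two_power_length_le_Suc_nat_of_str[of z] nat_of_str_less_two_power[of z] by auto
    then show "m \<in> {2 ^ n - 1 ..< 2 ^ n - 1 + 2 ^ n}" by auto
  qed
  have "card {z :: str. length z = n} = 2 ^ n"
    using card_lists_length_eq[of "UNIV :: bool set" n] by simp
  moreover have "inj_on nat_of_str {z. length z = n}"
    by (metis inj_onI str_of_nat_of_str)
  ultimately show "card (nat_of_str ` {z. length z = n}) = card {(2::nat) ^ n - 1 ..< 2 ^ n - 1 + 2 ^ n}"
    by (simp add: card_image)
qed simp

lemma length_str_of_nat_le_log: "real (length (str_of_nat n)) \<le> log 2 (real n + 2)"
proof -
  have "2 ^ length (str_of_nat n) \<le> n + 1"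
    using two_power_length_le_Suc_nat_of_str[of "str_of_nat n"] by simp
  then have "real (2 ^ length (str_of_nat n)) \<le> real (n + 1)" by (simp only: of_nat_le_iff)
  then have "(2::real) ^ length (str_of_nat n) \<le> real n + 2" by simp
  then have "log 2 ((2::real) ^ length (str_of_nat n)) \<le> log 2 (real n + 2)"
    by (subst log_le_cancel_iff) auto
  then show ?thesis by (simp add: log_nat_power)
qed

lemma nat_of_str_enc_set: "nat_of_str (enc_set A) = sd_list_code (sorted_list_of_set A)"
  unfolding enc_set_def sd_list_code_def ..

lemma enc_family_eq_enc_set: "enc_family F = enc_set (enc_set ` F)"
  unfolding enc_family_def enc_set_def ..

lemma sd_head_code_enc_set:
  assumes "finite B" "B \<noteq> {}"
  shows "sd_head_code (nat_of_str (enc_set B)) = nat_of_str (Min B)"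
  using parse_self_delim(2)[of "Min B"] sorted_list_of_set_nonempty[OF assms]
  by (simp add: enc_set_def)

text \<open>\<open>decode_set\<close> inverts \<open>enc_set\<close> on finite sets; on strings that code no set it still yields
  a finite set, so that every output of a program has a cell.\<close>
definition decode_set :: "str \<Rightarrow> str set" where
  "decode_set s = str_of_nat ` sd_elems (nat_of_str s)"

lemma decode_set_enc_set: "finite A \<Longrightarrow> decode_set (enc_set A) = A"
  by (simp add: decode_set_def nat_of_str_enc_set sd_elems_sd_list_code image_image)

definition cell :: "(str \<Rightarrow> str \<Rightarrow> str option) \<Rightarrow> str \<Rightarrow> str \<Rightarrow> str set" where
  "cell D p s = {w \<in> decode_set s. D p w = Some s}"

definition cells :: "(str \<Rightarrow> str \<Rightarrow> str option) \<Rightarrow> str \<Rightarrow> nat \<Rightarrow> str set set" where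
  "cells D p n = (\<lambda>z. cell D p (the (D p z))) ` {z. length z = n}"

lemma cell_enc_set: "finite A \<Longrightarrow> cell D p (enc_set A) = {w \<in> A. D p w = Some (enc_set A)}"
  by (simp add: cell_def decode_set_enc_set)

lemma finite_cell: "finite (cell D p s)"
  unfolding cell_def decode_set_def by (simp add: finite_sd_elems)

lemma finite_cells: "finite (cells D p n)"
  using finite_lists_length_eq[of "UNIV :: bool set" n] by (simp add: cells_def)

lemma finite_in_cells: "B \<in> cells D p n \<Longrightarrow> finite B"
  unfolding cells_def using finite_cell by blast

lemma is_partition_cells: "is_partition (cells D p n)"
  unfolding is_partition_def cells_def cell_def by auto

lemma cell_in_cells: "D p x = Some s \<Longrightarrow> cell D p s \<in> cells D p (length x)"
  unfolding cells_def by force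

lemma mem_cell_enc_set: "finite A \<Longrightarrow> x \<in> A \<Longrightarrow> D p x = Some (enc_set A) \<Longrightarrow> x \<in> cell D p (enc_set A)"
  by (simp add: cell_enc_set)

lemma card_cell_enc_set_le: "finite A \<Longrightarrow> card (cell D p (enc_set A)) \<le> card A"
  by (auto simp: cell_enc_set intro: card_mono)

section \<open>Short programs for the cells\<close>

locale universal_machine =
  fixes D :: "str \<Rightarrow> str \<Rightarrow> str option"
  assumes universal: "universal_decompressor D"
begin

lemma universal_simulates:
  assumes "ucomputable T 1 g"
  shows "\<exists>c. \<forall>p. T (nat_of_str p) \<longrightarrow> (\<exists>q. length q \<le> length p + c \<and>
    (\<forall>x. D q x = Some (str_of_nat (g (nat_of_str p) [nat_of_str x]))))"
proof -
  obtain r where r: "\<And>p x. T (nat_of_str p) \<Longrightarrow>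
      decompressor_of r p x = Some (str_of_nat (g (nat_of_str p) [nat_of_str x]))"
    using ucomputable_decompressor_of[OF assms] by blast
  obtain c where "\<And>p. \<exists>q. length q \<le> length p + c \<and> (\<forall>x. D q x = decompressor_of r p x)"
    using universal computable2_decompressor_of[of r] unfolding universal_decompressor_def by blast
  then show ?thesis using r by metis
qed

lemma CT_witness: "\<exists>p. length p = CT D y x \<and> (\<forall>z. D p z \<noteq> None) \<and> D p x = Some y"
proof -
  obtain q where "\<forall>x. D q x = Some y"
    using universal_simulates[OF ucomputable_const[of "\<lambda>q. True" 1 "nat_of_str y"]] by auto
  then have "\<exists>k p. length p = k \<and> (\<forall>z. D p z \<noteq> None) \<and> D p x = Some y" by blast
  from LeastI_ex[OF this] show ?thesis unfolding CT_def by blast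
qed

definition dec :: "nat \<Rightarrow> nat \<Rightarrow> nat" where
  "dec c b = nat_of_str (the (D (str_of_nat c) (str_of_nat b)))"

definition total_code :: "nat \<Rightarrow> bool" where
  "total_code c \<longleftrightarrow> (\<forall>z. D (str_of_nat c) z \<noteq> None)"

lemma dec_computable: "\<exists>r. \<forall>c b. total_code c \<longrightarrow> eval r [c, b] (dec c b)"
proof -
  obtain r where r: "\<And>p x y. D p x = Some y \<longleftrightarrow> eval r [nat_of_str p, nat_of_str x] (nat_of_str y)"
    using universal unfolding universal_decompressor_def computable2_def by blast
  have "eval r [c, b] (dec c b)" if total: "total_code c" for c b
  proof -
    obtain y where y: "D (str_of_nat c) (str_of_nat b) = Some y"
      using total unfolding total_code_def by blast
    then have "eval r [nat_of_str (str_of_nat c), nat_of_str (str_of_nat b)] (nat_of_str y)"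
      using r by blast
    then show ?thesis using y unfolding dec_def by simp
  qed
  then show ?thesis by blast
qed

text \<open>Two ways of calling a total program: the parameter is the program itself, or it is
  \<open>self_delim n @ p\<close> with the program \<open>p\<close> as tail.\<close>
sublocale prog: program_calls dec total_code total_code "\<lambda>q. q"
  using dec_computable by unfold_locales (auto intro: ucomputable_cong[OF ucomputable_param])

sublocale pair: program_calls dec total_code "\<lambda>q. total_code (sd_tail_code q)" sd_tail_code
  using dec_computable by unfold_locales (auto intro: ucomputable_sd_tail_code[OF ucomputable_param])

lemma dec_nat_of_str: "dec (nat_of_str p) (nat_of_str x) = nat_of_str (the (D p x))"
  by (simp add: dec_def)

lemma total_code_nat_of_str: "total_code (nat_of_str p) \<longleftrightarrow> (\<forall>z. D p z \<noteq> None)"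
  by (simp add: total_code_def)

lemma cell_of_dec:
  assumes "\<forall>z. D p z \<noteq> None"
  shows "cell_of dec (nat_of_str p) (nat_of_str s) = cell D p s"
proof -
  have "dec (nat_of_str p) (nat_of_str w) = nat_of_str s \<longleftrightarrow> D p w = Some s" for w
    using assms by (auto simp: dec_nat_of_str nat_of_str_eq_iff)
  then show ?thesis
    unfolding cell_of_def cell_def decode_set_def by (force simp: image_iff)
qed

lemma cell_code_dec:
  "\<forall>z. D p z \<noteq> None \<Longrightarrow>
   cell_code dec (nat_of_str p) (nat_of_str s) = nat_of_str (enc_set (cell D p s))"
  by (simp add: cell_code_eq cell_of_dec)

lemma cells_code_dec:
  assumes "\<forall>z. D p z \<noteq> None"
  shows "cells_code dec (nat_of_str p) n = nat_of_str (enc_family (cells D p n))"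
proof -
  have "(\<lambda>z. cell_of dec (nat_of_str p) (dec (nat_of_str p) z)) ` nat_of_str ` {z. length z = n}
      = cells D p n"
    by (simp add: cells_def image_image dec_nat_of_str cell_of_dec[OF assms])
  then show ?thesis
    unfolding cells_code_eq enc_family_eq_enc_set nat_of_str_image_length[symmetric] by simp
qed

lemma cell_of_output_program:
  "\<exists>c. \<forall>p. (\<forall>z. D p z \<noteq> None) \<longrightarrow> (\<exists>q. length q \<le> length p + c \<and>
     (\<forall>x. D q x = Some (enc_set (cell D p (the (D p x))))))"
proof -
  have "ucomputable total_code 1 (\<lambda>q xs. cell_code dec q (dec q (xs ! 0)))"
    by (intro prog.ucomputable_cell_code prog.ucomputable_dec ucomputable_intros) simp
  from universal_simulates[OF this] show ?thesis
    by (simp add: total_code_nat_of_str dec_nat_of_str cell_code_dec)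
qed

lemma cell_program:
  "\<exists>c. \<forall>p. (\<forall>z. D p z \<noteq> None) \<longrightarrow> (\<exists>q. length q \<le> length p + c \<and>
     (\<forall>s. D q s = Some (enc_set (cell D p s))))"
proof -
  have "ucomputable total_code 1 (\<lambda>q xs. cell_code dec q (xs ! 0))"
    by (intro prog.ucomputable_cell_code ucomputable_intros) simp
  from universal_simulates[OF this] show ?thesis
    by (simp add: total_code_nat_of_str cell_code_dec)
qed

lemma Min_program:
  "\<exists>c. \<forall>p. (\<forall>z. D p z \<noteq> None) \<longrightarrow> (\<exists>q. length q \<le> length p + c \<and>
     (\<forall>z. D q z \<noteq> None) \<and> (\<forall>B. finite B \<longrightarrow> B \<noteq> {} \<longrightarrow> D q (enc_set B) = D p (Min B)))"
proof -
  have "ucomputable total_code 1 (\<lambda>q xs. dec q (sd_head_code (xs ! 0)))"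
    by (intro prog.ucomputable_dec ucomputable_intros) simp
  from universal_simulates[OF this] obtain c where c: "\<And>p. \<forall>z. D p z \<noteq> None \<Longrightarrow>
      \<exists>q. length q \<le> length p + c \<and>
        (\<forall>x. D q x = Some (str_of_nat (dec (nat_of_str p) (sd_head_code (nat_of_str x)))))"
    by (auto simp: total_code_nat_of_str)
  have "Some (str_of_nat (dec (nat_of_str p) (sd_head_code (nat_of_str (enc_set B))))) = D p (Min B)"
    if "\<forall>z. D p z \<noteq> None" "finite B" "B \<noteq> {}" for p B
    using that by (auto simp: sd_head_code_enc_set dec_nat_of_str)
  with c show ?thesis by (metis option.distinct(1))
qed

text \<open>The partition is printed by the program \<open>p\<close> with the self-delimited length \<open>n\<close> in front,
  which costs \<open>O(log n)\<close> extra bits.\<close>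
lemma cells_program:
  "\<exists>c. \<forall>p n. (\<forall>z. D p z \<noteq> None) \<longrightarrow> (\<exists>q. length q \<le> length p + 2 * length (str_of_nat n) + c \<and>
     D q [] = Some (enc_family (cells D p n)))"
proof -
  have "ucomputable (\<lambda>q. total_code (sd_tail_code q)) 1
      (\<lambda>q xs. cells_code dec (sd_tail_code q) (sd_head_code q))"
    by (intro pair.ucomputable_cells_code ucomputable_intros)
  from universal_simulates[OF this] obtain c where c: "\<And>p'. total_code (sd_tail_code (nat_of_str p')) \<Longrightarrow>
      \<exists>q. length q \<le> length p' + c \<and> (\<forall>x. D q x = Some (str_of_nat
        (cells_code dec (sd_tail_code (nat_of_str p')) (sd_head_code (nat_of_str p')))))"
    by auto
  have "\<exists>q. length q \<le> length p + 2 * length (str_of_nat n) + (c + 2) \<and>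
      D q [] = Some (enc_family (cells D p n))" if total: "\<forall>z. D p z \<noteq> None" for p n
    using c[of "self_delim (str_of_nat n) @ p"] parse_self_delim[of "str_of_nat n" p] total
    by (force simp: total_code_nat_of_str cells_code_dec length_self_delim algebra_simps)
  then show ?thesis by blast
qed

lemma cell_complexity_bounds:
  "\<exists>c. \<forall>p x A. (\<forall>z. D p z \<noteq> None) \<longrightarrow> D p x = Some (enc_set A) \<longrightarrow> finite A \<longrightarrow> x \<in> A \<longrightarrow>
     CT D (enc_set (cell D p (enc_set A))) x \<le> length p + c \<and>
     CT D (enc_set (cell D p (enc_set A))) (enc_set A) \<le> length p + c \<and>
     CT D (enc_set A) (enc_set (cell D p (enc_set A))) \<le> length p + c \<and>
     KC D (enc_family (cells D p (length x))) \<le> length p + 2 * length (str_of_nat (length x)) + c"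
proof -
  obtain c1 where out: "\<And>p. \<forall>z. D p z \<noteq> None \<Longrightarrow> \<exists>q. length q \<le> length p + c1 \<and>
      (\<forall>x. D q x = Some (enc_set (cell D p (the (D p x)))))"
    using cell_of_output_program by blast
  obtain c2 where cel: "\<And>p. \<forall>z. D p z \<noteq> None \<Longrightarrow> \<exists>q. length q \<le> length p + c2 \<and>
      (\<forall>s. D q s = Some (enc_set (cell D p s)))"
    using cell_program by blast
  obtain c3 where mn: "\<And>p. \<forall>z. D p z \<noteq> None \<Longrightarrow> \<exists>q. length q \<le> length p + c3 \<and>
      (\<forall>z. D q z \<noteq> None) \<and> (\<forall>B. finite B \<longrightarrow> B \<noteq> {} \<longrightarrow> D q (enc_set B) = D p (Min B))"
    using Min_program by blast
  obtain c4 where fam: "\<And>p n. \<forall>z. D p z \<noteq> None \<Longrightarrow>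
      \<exists>q. length q \<le> length p + 2 * length (str_of_nat n) + c4 \<and> D q [] = Some (enc_family (cells D p n))"
    using cells_program by blast
  let ?c = "c1 + c2 + c3 + c4"
  have "CT D (enc_set (cell D p (enc_set A))) x \<le> length p + ?c \<and>
     CT D (enc_set (cell D p (enc_set A))) (enc_set A) \<le> length p + ?c \<and>
     CT D (enc_set A) (enc_set (cell D p (enc_set A))) \<le> length p + ?c \<and>
     KC D (enc_family (cells D p (length x))) \<le> length p + 2 * length (str_of_nat (length x)) + ?c"
    if total: "\<forall>z. D p z \<noteq> None" and px: "D p x = Some (enc_set A)" and A: "finite A" "x \<in> A"
    for p x A
  proof (intro conjI)
    let ?A1 = "cell D p (enc_set A)"
    obtain q1 where q1: "length q1 \<le> length p + c1" "\<forall>x. D q1 x = Some (enc_set (cell D p (the (D p x))))"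
      using out[OF total] by blast
    have "CT D (enc_set ?A1) x \<le> length q1" by (rule CT_le_length) (use q1 px in auto)
    with q1 show "CT D (enc_set ?A1) x \<le> length p + ?c" by linarith
    obtain q2 where q2: "length q2 \<le> length p + c2" "\<forall>s. D q2 s = Some (enc_set (cell D p s))"
      using cel[OF total] by blast
    have "CT D (enc_set ?A1) (enc_set A) \<le> length q2" by (rule CT_le_length) (use q2 in auto)
    with q2 show "CT D (enc_set ?A1) (enc_set A) \<le> length p + ?c" by linarith
    have A1: "finite ?A1" "?A1 \<noteq> {}" "\<And>w. w \<in> ?A1 \<Longrightarrow> D p w = Some (enc_set A)"
      using A px by (auto simp: finite_cell cell_enc_set)
    obtain q3 where q3: "length q3 \<le> length p + c3" "\<forall>z. D q3 z \<noteq> None"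
      "D q3 (enc_set ?A1) = D p (Min ?A1)"
      using mn[OF total] A1(1,2) by blast
    moreover have "D p (Min ?A1) = Some (enc_set A)" using A1 Min_in by blast
    ultimately have "CT D (enc_set A) (enc_set ?A1) \<le> length q3" by (intro CT_le_length) auto
    with q3 show "CT D (enc_set A) (enc_set ?A1) \<le> length p + ?c" by linarith
    obtain q4 where q4: "length q4 \<le> length p + 2 * length (str_of_nat (length x)) + c4"
      "D q4 [] = Some (enc_family (cells D p (length x)))"
      using fam[OF total] by blast
    have "KC D (enc_family (cells D p (length x))) \<le> length q4" by (rule KC_le_length) (use q4 in auto)
    with q4 show
      "KC D (enc_family (cells D p (length x))) \<le> length p + 2 * length (str_of_nat (length x)) + ?c"
      by linarith
  qed
  then show ?thesis by blast
qed
end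

lemma additive_bound_le_log_bound:
  fixes \<epsilon> L :: real
  assumes l: "real l \<le> \<epsilon>" and L: "1 \<le> L"
  shows "b \<le> l + m + c \<Longrightarrow> real m \<le> 2 * L \<Longrightarrow> real b \<le> \<epsilon> + (real c + 2) * L"
    and "b \<le> l + c \<Longrightarrow> real b < \<epsilon> + (real c + 2) * L"
proof -
  have cL: "real c \<le> real c * L" using L by (simp add: mult_le_cancel_left1)
  have distrib: "(real c + 2) * L = real c * L + 2 * L" by (simp add: algebra_simps)
  show "real b \<le> \<epsilon> + (real c + 2) * L" if "b \<le> l + m + c" "real m \<le> 2 * L"
  proof -
    have "real b \<le> real l + real m + real c" using that(1) by (metis of_nat_add of_nat_mono)
    then show ?thesis using that(2) l cL distrib by linarith
  qed
  show "real b < \<epsilon> + (real c + 2) * L" if "b \<le> l + c"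
  proof -
    have "real b \<le> real l + real c" using that by (metis of_nat_add of_nat_mono)
    then show ?thesis using l L cL distrib by linarith
  qed
qed

theorem lemma4:
  fixes D :: "str \<Rightarrow> str \<Rightarrow> str option"
  assumes "universal_decompressor D"
  shows "\<exists>c::real. \<forall>(n::nat) (x::str) (A::str set) (\<epsilon>::real).
    length x = n \<and> finite A \<and> x \<in> A \<and> real (CT D (enc_set A) x) \<le> \<epsilon> \<longrightarrow>
    (\<exists>A1 \<A>. finite A1 \<and> finite \<A> \<and> (\<forall>B\<in>\<A>. finite B) \<and> is_partition \<A> \<and>
       real (KC D (enc_family \<A>)) \<le> \<epsilon> + c * log 2 (real n + 2) \<and>
       x \<in> A1 \<and> real (CT D (enc_set A1) x) \<le> \<epsilon> + c * log 2 (real n + 2) \<and>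
       real (CT D (enc_set A) (enc_set A1)) < \<epsilon> + c * log 2 (real n + 2) \<and>
       real (CT D (enc_set A1) (enc_set A)) < \<epsilon> + c * log 2 (real n + 2) \<and>
       card A1 \<le> card A \<and>
       A1 \<in> \<A>)"
proof -
  interpret universal_machine D using assms by (rule universal_machine.intro)
  obtain c where c: "\<And>p x A. \<forall>z. D p z \<noteq> None \<Longrightarrow> D p x = Some (enc_set A) \<Longrightarrow> finite A \<Longrightarrow> x \<in> A \<Longrightarrow>
     CT D (enc_set (cell D p (enc_set A))) x \<le> length p + c \<and>
     CT D (enc_set (cell D p (enc_set A))) (enc_set A) \<le> length p + c \<and>
     CT D (enc_set A) (enc_set (cell D p (enc_set A))) \<le> length p + c \<and>
     KC D (enc_family (cells D p (length x))) \<le> length p + 2 * length (str_of_nat (length x)) + c"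
    using cell_complexity_bounds by blast
  show ?thesis
  proof (intro exI[of _ "real c + 2"] allI impI, elim conjE)
    fix n x A \<epsilon>
    assume n: "length x = n" and A: "finite A" "x \<in> A" and \<epsilon>: "real (CT D (enc_set A) x) \<le> \<epsilon>"
    obtain p where "length p = CT D (enc_set A) x" and total: "\<forall>z. D p z \<noteq> None"
      and px: "D p x = Some (enc_set A)"
      using CT_witness by blast
    with \<epsilon> have l: "real (length p) \<le> \<epsilon>" by simp
    have L: "1 \<le> log 2 (real n + 2)" by simp
    note log_bound = additive_bound_le_log_bound[OF l L]
    let ?A1 = "cell D p (enc_set A)"
    from c[OF total px A] n have bounds:
      "CT D (enc_set ?A1) x \<le> length p + c" "CT D (enc_set ?A1) (enc_set A) \<le> length p + c"
      "CT D (enc_set A) (enc_set ?A1) \<le> length p + c"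
      "KC D (enc_family (cells D p n)) \<le> length p + 2 * length (str_of_nat n) + c"
      by auto
    have "real (2 * length (str_of_nat n)) \<le> 2 * log 2 (real n + 2)"
      using length_str_of_nat_le_log[of n] by simp
    moreover have "?A1 \<in> cells D p n" using cell_in_cells[of D p x] px n by simp
    ultimately show "\<exists>A1 \<A>. finite A1 \<and> finite \<A> \<and> (\<forall>B\<in>\<A>. finite B) \<and> is_partition \<A> \<and>
       real (KC D (enc_family \<A>)) \<le> \<epsilon> + (real c + 2) * log 2 (real n + 2) \<and>
       x \<in> A1 \<and> real (CT D (enc_set A1) x) \<le> \<epsilon> + (real c + 2) * log 2 (real n + 2) \<and>
       real (CT D (enc_set A) (enc_set A1)) < \<epsilon> + (real c + 2) * log 2 (real n + 2) \<and>
       real (CT D (enc_set A1) (enc_set A)) < \<epsilon> + (real c + 2) * log 2 (real n + 2) \<and>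
       card A1 \<le> card A \<and> A1 \<in> \<A>"
      using log_bound(2)[OF bounds(1)] log_bound(2)[OF bounds(2)] log_bound(2)[OF bounds(3)]
        log_bound(1)[OF bounds(4)] mem_cell_enc_set[of A x D p, OF A px] card_cell_enc_set_le[OF A(1)]
      by (intro exI[of _ ?A1] exI[of _ "cells D p n"])
         (auto simp: less_imp_le finite_cell finite_cells finite_in_cells is_partition_cells)
  qed
qed

end
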